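(* Let $f\colon X\to Y$ be a morphism in a pre-Hilbert $*$-category. The following are equivalent: (i) $f$ is strictly contractive; (ii) $f$ has a codilation $(S,s_1,s_2)$ that is a coproduct (i.e. $(S,s_1,s_2)$ is a coproduct of $X$ and $Y$); (iii) $\begin{bmatrix}1 & f^*\\ f & 1\end{bmatrix}\succ 0$ as an endomorphism of $X\oplus Y$. Furthermore, if these equivalent conditions hold, then any codilation $(S,s_1,s_2)$ of $f$ that is a coproduct is a codilator of $f$.
   Context: A $*$-category is a category with a choice of $f^*\colon Y\to X$ for each $f\colon X\to Y$ such that $1^*=1$, $(gf)^*=f^*g^*$, $(f^* )^*=f$; $f$ is an isometry if $f^*f=1$. A pre-Hilbert $*$-category is a $*$-category with (R1) a zero object, (R2) orthonormal biproducts of all pairs of objects (biproducts $(X,s_1,r_1,s_2,r_2)$ with $r_k=s_k^*$; matrices of morphisms between biproducts are taken with respect to these), (R3) an isometric kernel for every morphism, and (R4) every diagonal $\Delta\colon X\to X\oplus X$ a kernel of some morphism. Such a category is additive. For Hermitian endomorphisms $a,b$ of $A$, $a\leq b$ means $b-a=y^*y$ for some $y\colon A\to Y$; $a\prec b$ (equivalently $b\succ a$) means $a\leq b$ and $b-a$ is invertible. A morphism $f$ is strictly contractive if $f^*f\prec 1$. A codilation of $f\colon X\to Y$ is a cospan $(T,t_1,t_2)$ with $t_1\colon X\to T$, $t_2\colon Y\to T$ isometries and $t_2^*t_1=f$. A codilator of $f$ is a codilation $(S,s_1,s_2)$ such that for every codilation $(T,t_1,t_2)$ of $f$ there is a unique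 isometry $t\colon S\to T$ with $ts_1=t_1$ and $ts_2=t_2$. *)

theory Defs
  imports Main
begin

text \<open>A (possibly large) category with a chosen involution, given by explicit data.
  Objects have type 'o, morphisms type 'm; cp g f is the composite g o f.\<close>

record ('o, 'm) scat =
  Ob  :: "'o set"
  Ar  :: "'m set"
  dom :: "'m \<Rightarrow> 'o"
  cod :: "'m \<Rightarrow> 'o"
  cp  :: "'m \<Rightarrow> 'm \<Rightarrow> 'm"
  idt :: "'o \<Rightarrow> 'm"
  str :: "'m \<Rightarrow> 'm"

definition hom :: "('o, 'm) scat \<Rightarrow> 'o \<Rightarrow> 'o \<Rightarrow> 'm set" where
  "hom C X Y = {f \<in> Ar C. dom C f = X \<and> cod C f = Y}"

definition is_category :: "('o, 'm) scat \<Rightarrow> bool" where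
  "is_category C \<longleftrightarrow>
     (\<forall>f \<in> Ar C. dom C f \<in> Ob C \<and> cod C f \<in> Ob C) \<and>
     (\<forall>X \<in> Ob C. idt C X \<in> hom C X X) \<and>
     (\<forall>X Y Z f g. f \<in> hom C X Y \<and> g \<in> hom C Y Z \<longrightarrow> cp C g f \<in> hom C X Z) \<and>
     (\<forall>X Y f. f \<in> hom C X Y \<longrightarrow> cp C f (idt C X) = f \<and> cp C (idt C Y) f = f) \<and>
     (\<forall>W X Y Z f g h. f \<in> hom C W X \<and> g \<in> hom C X Y \<and> h \<in> hom C Y Z \<longrightarrow>
        cp C h (cp C g f) = cp C (cp C h g) f)"

definition is_star_category :: "('o, 'm) scat \<Rightarrow> bool" where
  "is_star_category C \<longleftrightarrow> is_category C \<and>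
     (\<forall>X Y f. f \<in> hom C X Y \<longrightarrow> str C f \<in> hom C Y X) \<and>
     (\<forall>X \<in> Ob C. str C (idt C X) = idt C X) \<and>
     (\<forall>X Y Z f g. f \<in> hom C X Y \<and> g \<in> hom C Y Z \<longrightarrow>
        str C (cp C g f) = cp C (str C f) (str C g)) \<and>
     (\<forall>f \<in> Ar C. str C (str C f) = f)"

definition isometry :: "('o, 'm) scat \<Rightarrow> 'm \<Rightarrow> bool" where
  "isometry C f \<longleftrightarrow> f \<in> Ar C \<and> cp C (str C f) f = idt C (dom C f)"

definition invertible :: "('o, 'm) scat \<Rightarrow> 'm \<Rightarrow> bool" where
  "invertible C f \<longleftrightarrow> f \<in> Ar C \<and>
     (\<exists>g \<in> hom C (cod C f) (dom C f). cp C g f = idt C (dom C f) \<and> cp C f g = idt C (cod C f))"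

definition hermitian :: "('o, 'm) scat \<Rightarrow> 'm \<Rightarrow> bool" where
  "hermitian C a \<longleftrightarrow> a \<in> hom C (dom C a) (dom C a) \<and> str C a = a"

definition zero_obj :: "('o, 'm) scat \<Rightarrow> 'o \<Rightarrow> bool" where
  "zero_obj C Z \<longleftrightarrow> Z \<in> Ob C \<and>
     (\<forall>X \<in> Ob C. (\<exists>!f. f \<in> hom C X Z) \<and> (\<exists>!f. f \<in> hom C Z X))"

definition is_zero :: "('o, 'm) scat \<Rightarrow> 'm \<Rightarrow> bool" where
  "is_zero C f \<longleftrightarrow> (\<exists>Z a b. zero_obj C Z \<and> a \<in> hom C (dom C f) Z \<and>
      b \<in> hom C Z (cod C f) \<and> f = cp C b a)"

definition zero :: "('o, 'm) scat \<Rightarrow> 'o \<Rightarrow> 'o \<Rightarrow> 'm" where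
  "zero C X Y = (THE z. z \<in> hom C X Y \<and> is_zero C z)"

definition is_product :: "('o, 'm) scat \<Rightarrow> 'o \<Rightarrow> 'o \<Rightarrow> 'o \<Rightarrow> 'm \<Rightarrow> 'm \<Rightarrow> bool" where
  "is_product C A B P r1 r2 \<longleftrightarrow> P \<in> Ob C \<and> r1 \<in> hom C P A \<and> r2 \<in> hom C P B \<and>
     (\<forall>Z g1 g2. g1 \<in> hom C Z A \<and> g2 \<in> hom C Z B \<longrightarrow>
        (\<exists>!h. h \<in> hom C Z P \<and> cp C r1 h = g1 \<and> cp C r2 h = g2))"

definition is_coproduct :: "('o, 'm) scat \<Rightarrow> 'o \<Rightarrow> 'o \<Rightarrow> 'o \<Rightarrow> 'm \<Rightarrow> 'm \<Rightarrow> bool" where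
  "is_coproduct C A B S s1 s2 \<longleftrightarrow> S \<in> Ob C \<and> s1 \<in> hom C A S \<and> s2 \<in> hom C B S \<and>
     (\<forall>Z g1 g2. g1 \<in> hom C A Z \<and> g2 \<in> hom C B Z \<longrightarrow>
        (\<exists>!h. h \<in> hom C S Z \<and> cp C h s1 = g1 \<and> cp C h s2 = g2))"

definition is_biproduct ::
  "('o, 'm) scat \<Rightarrow> 'o \<Rightarrow> 'o \<Rightarrow> 'o \<Rightarrow> 'm \<Rightarrow> 'm \<Rightarrow> 'm \<Rightarrow> 'm \<Rightarrow> bool" where
  "is_biproduct C A B P s1 r1 s2 r2 \<longleftrightarrow>
     is_product C A B P r1 r2 \<and> is_coproduct C A B P s1 s2 \<and>
     cp C r1 s1 = idt C A \<and> cp C r2 s2 = idt C B \<and>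
     is_zero C (cp C r2 s1) \<and> is_zero C (cp C r1 s2)"

definition ortho_biproduct ::
  "('o, 'm) scat \<Rightarrow> 'o \<Rightarrow> 'o \<Rightarrow> 'o \<Rightarrow> 'm \<Rightarrow> 'm \<Rightarrow> 'm \<Rightarrow> 'm \<Rightarrow> bool" where
  "ortho_biproduct C A B P s1 r1 s2 r2 \<longleftrightarrow>
     is_biproduct C A B P s1 r1 s2 r2 \<and> r1 = str C s1 \<and> r2 = str C s2"

definition is_kernel :: "('o, 'm) scat \<Rightarrow> 'm \<Rightarrow> 'm \<Rightarrow> bool" where
  "is_kernel C k f \<longleftrightarrow> f \<in> Ar C \<and> k \<in> hom C (dom C k) (dom C f) \<and> is_zero C (cp C f k) \<and>
     (\<forall>Z g. g \<in> hom C Z (dom C f) \<and> is_zero C (cp C f g) \<longrightarrow>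
        (\<exists>!h. h \<in> hom C Z (dom C k) \<and> cp C k h = g))"

definition pre_hilbert :: "('o, 'm) scat \<Rightarrow> bool" where
  "pre_hilbert C \<longleftrightarrow> is_star_category C \<and>
     (\<exists>Z. zero_obj C Z) \<and>
     (\<forall>A \<in> Ob C. \<forall>B \<in> Ob C. \<exists>P s1 s2. ortho_biproduct C A B P s1 (str C s1) s2 (str C s2)) \<and>
     (\<forall>f \<in> Ar C. \<exists>k. is_kernel C k f \<and> isometry C k) \<and>
     (\<forall>X \<in> Ob C. \<forall>P s1 r1 s2 r2 d. ortho_biproduct C X X P s1 r1 s2 r2 \<and>
        d \<in> hom C X P \<and> cp C r1 d = idt C X \<and> cp C r2 d = idt C X \<longrightarrow>
        (\<exists>g. is_kernel C d g))"

text \<open>Sum of parallel morphisms f, g : X -> Y via a biproduct Y (+) Y: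
  h = nabla o <f,g>.  is_sum C f g h means h = f + g.\<close>
definition is_sum :: "('o, 'm) scat \<Rightarrow> 'm \<Rightarrow> 'm \<Rightarrow> 'm \<Rightarrow> bool" where
  "is_sum C f g h \<longleftrightarrow> (\<exists>X Y P s1 r1 s2 r2 p q.
     f \<in> hom C X Y \<and> g \<in> hom C X Y \<and> is_biproduct C Y Y P s1 r1 s2 r2 \<and>
     p \<in> hom C X P \<and> cp C r1 p = f \<and> cp C r2 p = g \<and>
     q \<in> hom C P Y \<and> cp C q s1 = idt C Y \<and> cp C q s2 = idt C Y \<and>
     h = cp C q p)"

definition herm_le :: "('o, 'm) scat \<Rightarrow> 'm \<Rightarrow> 'm \<Rightarrow> bool" where
  "herm_le C a b \<longleftrightarrow> hermitian C a \<and> hermitian C b \<and> dom C a = dom C b \<and>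
     (\<exists>W y. y \<in> hom C (dom C a) W \<and> is_sum C a (cp C (str C y) y) b)"

definition herm_lt :: "('o, 'm) scat \<Rightarrow> 'm \<Rightarrow> 'm \<Rightarrow> bool" where
  "herm_lt C a b \<longleftrightarrow> hermitian C a \<and> hermitian C b \<and> dom C a = dom C b \<and>
     (\<exists>W y. y \<in> hom C (dom C a) W \<and> is_sum C a (cp C (str C y) y) b \<and>
        invertible C (cp C (str C y) y))"

definition strictly_contractive :: "('o, 'm) scat \<Rightarrow> 'm \<Rightarrow> bool" where
  "strictly_contractive C f \<longleftrightarrow> herm_lt C (cp C (str C f) f) (idt C (dom C f))"

definition codilation :: "('o, 'm) scat \<Rightarrow> 'm \<Rightarrow> 'o \<Rightarrow> 'm \<Rightarrow> 'm \<Rightarrow> bool" where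
  "codilation C f T t1 t2 \<longleftrightarrow> t1 \<in> hom C (dom C f) T \<and> t2 \<in> hom C (cod C f) T \<and>
     isometry C t1 \<and> isometry C t2 \<and> cp C (str C t2) t1 = f"

definition codilator :: "('o, 'm) scat \<Rightarrow> 'm \<Rightarrow> 'o \<Rightarrow> 'm \<Rightarrow> 'm \<Rightarrow> bool" where
  "codilator C f S s1 s2 \<longleftrightarrow> codilation C f S s1 s2 \<and>
     (\<forall>T t1 t2. codilation C f T t1 t2 \<longrightarrow>
        (\<exists>!t. t \<in> hom C S T \<and> isometry C t \<and> cp C t s1 = t1 \<and> cp C t s2 = t2))"

end

theory Submission
  imports Defs
begin

(*
  A pre-Hilbert *-category is additive: f + g is computed through any biproduct, and negatives
  exist because the diagonal of X \<oplus> X is a kernel.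

  Strict contractivity of f : X -> Y means f* f + y* y = 1 for some y with y* y invertible, and y
  may be taken invertible by corestricting it to the range of the projection y (y* y)^-1 y*.  Then
  s1 = i1 f + i2 y into Y \<oplus> K together with i1 is a codilation of f, and it is a coproduct because
  y is invertible.  Conversely, if (S, s1, s2) is a codilation of f that is a coproduct and k is an
  isometric kernel of s2*, then s2 s2* + k k* = 1 gives f* f + (k* s1)* (k* s1) = 1, and k* s1 is
  invertible with inverse h k, where h : S -> X is the copairing of 1 and 0.

  For every codilation (t1, t2) the block matrix [[1, f*], [f, 1]] is the Gram matrix z* z of
  z = [t1, t2] : X \<oplus> Y -> T.  For a coproduct codilation z is invertible, so the matrix is
  strictly positive; conversely, if z* z is invertible then so is its Schur complement 1 - f* f,
  which is the defect y* y of the codilation.  Finally, the comparison map t from a coproduct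
  codilation to any codilation satisfies t* t si = si, since both codilations have the same Gram
  matrix, so t is an isometry.
*)

locale pre_hilbert_category =
  fixes C :: "('o, 'm) scat"
  assumes pre_hilbert: "pre_hilbert C"
begin

abbreviation ccomp :: "'m \<Rightarrow> 'm \<Rightarrow> 'm"  (infixr \<open>\<cdot>\<close> 70)
  where "g \<cdot> f \<equiv> cp C g f"

abbreviation cstar :: "'m \<Rightarrow> 'm"  (\<open>_\<^sup>\<dagger>\<close> [1000] 999)
  where "f\<^sup>\<dagger> \<equiv> str C f"

lemma star_category: "is_star_category C"
  using pre_hilbert by (simp add: pre_hilbert_def)

lemma category: "is_category C"
  using star_category by (simp add: is_star_category_def)

lemma in_hom_iff: "f \<in> hom C X Y \<longleftrightarrow> f \<in> Ar C \<and> dom C f = X \<and> cod C f = Y"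
  by (simp add: hom_def)

lemma dom_in_Ob [simp]: "f \<in> Ar C \<Longrightarrow> dom C f \<in> Ob C"
  and cod_in_Ob [simp]: "f \<in> Ar C \<Longrightarrow> cod C f \<in> Ob C"
  using category by (simp_all add: is_category_def)

lemma in_hom_Ob:
  assumes "f \<in> hom C X Y"
  shows "X \<in> Ob C" "Y \<in> Ob C"
  using assms dom_in_Ob cod_in_Ob unfolding in_hom_iff by metis+

lemma comp_in_hom: "f \<in> hom C X Y \<Longrightarrow> g \<in> hom C Y Z \<Longrightarrow> g \<cdot> f \<in> hom C X Z"
  using category unfolding is_category_def by blast

lemma comp_in_Ar [simp]: "f \<in> Ar C \<Longrightarrow> g \<in> Ar C \<Longrightarrow> dom C g = cod C f \<Longrightarrow> g \<cdot> f \<in> Ar C"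
  and dom_comp [simp]: "f \<in> Ar C \<Longrightarrow> g \<in> Ar C \<Longrightarrow> dom C g = cod C f \<Longrightarrow> dom C (g \<cdot> f) = dom C f"
  and cod_comp [simp]: "f \<in> Ar C \<Longrightarrow> g \<in> Ar C \<Longrightarrow> dom C g = cod C f \<Longrightarrow> cod C (g \<cdot> f) = cod C g"
  using comp_in_hom[of f "dom C f" "cod C f" g "cod C g"] by (simp_all add: in_hom_iff)

lemma id_in_hom: "X \<in> Ob C \<Longrightarrow> idt C X \<in> hom C X X"
  using category unfolding is_category_def by blast

lemma id_in_Ar [simp]: "X \<in> Ob C \<Longrightarrow> idt C X \<in> Ar C"
  and dom_id [simp]: "X \<in> Ob C \<Longrightarrow> dom C (idt C X) = X"
  and cod_id [simp]: "X \<in> Ob C \<Longrightarrow> cod C (idt C X) = X"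
  using id_in_hom by (simp_all add: in_hom_iff)

lemma comp_id_right [simp]: "f \<in> Ar C \<Longrightarrow> dom C f = X \<Longrightarrow> f \<cdot> idt C X = f"
  using category unfolding is_category_def in_hom_iff by blast

lemma comp_id_left [simp]: "f \<in> Ar C \<Longrightarrow> cod C f = X \<Longrightarrow> idt C X \<cdot> f = f"
  using category unfolding is_category_def in_hom_iff by blast

lemma comp_assoc:
  assumes "f \<in> Ar C" "g \<in> Ar C" "h \<in> Ar C" "dom C g = cod C f" "dom C h = cod C g"
  shows "(h \<cdot> g) \<cdot> f = h \<cdot> g \<cdot> f"
proof -
  have "f \<in> hom C (dom C f) (cod C f)" "g \<in> hom C (cod C f) (cod C g)"
    "h \<in> hom C (cod C g) (cod C h)"
    using assms by (auto simp: in_hom_iff)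
  then show ?thesis
    using category unfolding is_category_def by metis
qed

lemma comp_assoc_hom:
  "f \<in> hom C X Y \<Longrightarrow> g \<in> hom C Y Z \<Longrightarrow> h \<in> hom C Z W \<Longrightarrow> h \<cdot> g \<cdot> f = (h \<cdot> g) \<cdot> f"
  by (simp add: in_hom_iff comp_assoc)

lemma comp_assoc_subst:
  "f \<in> hom C X Y \<Longrightarrow> g \<in> hom C Y Z \<Longrightarrow> h \<in> hom C Z W \<Longrightarrow> h \<cdot> g = k \<Longrightarrow> h \<cdot> g \<cdot> f = k \<cdot> f"
  using comp_assoc_hom by simp

lemma star_in_hom: "f \<in> hom C X Y \<Longrightarrow> f\<^sup>\<dagger> \<in> hom C Y X"
  using star_category unfolding is_star_category_def by blast

lemma star_in_Ar [simp]: "f \<in> Ar C \<Longrightarrow> f\<^sup>\<dagger> \<in> Ar C"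
  and dom_star [simp]: "f \<in> Ar C \<Longrightarrow> dom C (f\<^sup>\<dagger>) = cod C f"
  and cod_star [simp]: "f \<in> Ar C \<Longrightarrow> cod C (f\<^sup>\<dagger>) = dom C f"
  using star_in_hom[of f "dom C f" "cod C f"] by (simp_all add: in_hom_iff)

lemma star_star [simp]: "f \<in> Ar C \<Longrightarrow> (f\<^sup>\<dagger>)\<^sup>\<dagger> = f"
  and star_id [simp]: "X \<in> Ob C \<Longrightarrow> (idt C X)\<^sup>\<dagger> = idt C X"
  using star_category unfolding is_star_category_def by blast+

lemma star_comp [simp]:
  assumes "f \<in> Ar C" "g \<in> Ar C" "dom C g = cod C f"
  shows "(g \<cdot> f)\<^sup>\<dagger> = f\<^sup>\<dagger> \<cdot> g\<^sup>\<dagger>"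
proof -
  have "f \<in> hom C (dom C f) (cod C f)" "g \<in> hom C (cod C f) (cod C g)"
    using assms by (auto simp: in_hom_iff)
  then show ?thesis
    using star_category unfolding is_star_category_def by metis
qed

lemma star_inject: "f \<in> Ar C \<Longrightarrow> g \<in> Ar C \<Longrightarrow> f\<^sup>\<dagger> = g\<^sup>\<dagger> \<Longrightarrow> f = g"
  by (metis star_star)

lemma invertibleE:
  assumes "invertible C z" "z \<in> hom C P S"
  obtains zi where "zi \<in> hom C S P" "zi \<cdot> z = idt C P" "z \<cdot> zi = idt C S"
proof -
  have "dom C z = P" "cod C z = S"
    using assms(2) by (simp_all add: in_hom_iff)
  then show ?thesis
    using assms(1) that unfolding invertible_def by blast
qed

lemma invertibleI:
  assumes "z \<in> hom C P S" "zi \<in> hom C S P" "zi \<cdot> z = idt C P" "z \<cdot> zi = idt C S"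
  shows "invertible C z"
proof -
  have "dom C z = P" "cod C z = S" "z \<in> Ar C"
    using assms(1) by (simp_all add: in_hom_iff)
  then show ?thesis
    using assms(2-4) unfolding invertible_def by blast
qed

lemma isometryD: "isometry C s \<Longrightarrow> s \<in> hom C X Y \<Longrightarrow> s\<^sup>\<dagger> \<cdot> s = idt C X"
  unfolding isometry_def by (simp add: in_hom_iff)

subsection \<open>Zero morphisms\<close>

lemma zero_obj_hom_to_unique:
  "zero_obj C Z \<Longrightarrow> a \<in> hom C X Z \<Longrightarrow> a' \<in> hom C X Z \<Longrightarrow> a = a'"
  unfolding zero_obj_def in_hom_iff by (metis dom_in_Ob)

lemma zero_obj_hom_from_unique:
  "zero_obj C Z \<Longrightarrow> b \<in> hom C Z Y \<Longrightarrow> b' \<in> hom C Z Y \<Longrightarrow> b = b'"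
  unfolding zero_obj_def in_hom_iff by (metis cod_in_Ob)

lemma zero_obj_ex_hom_to: "zero_obj C Z \<Longrightarrow> X \<in> Ob C \<Longrightarrow> \<exists>a. a \<in> hom C X Z"
  and zero_obj_ex_hom_from: "zero_obj C Z \<Longrightarrow> Y \<in> Ob C \<Longrightarrow> \<exists>b. b \<in> hom C Z Y"
  unfolding zero_obj_def by blast+

lemma is_zeroE:
  assumes "is_zero C h" "h \<in> hom C X Y"
  obtains Z a b where "zero_obj C Z" "a \<in> hom C X Z" "b \<in> hom C Z Y" "h = b \<cdot> a"
proof -
  have "dom C h = X" "cod C h = Y"
    using assms(2) by (simp_all add: in_hom_iff)
  then show ?thesis
    using assms(1) that unfolding is_zero_def by blast
qed

lemma is_zeroI: "zero_obj C Z \<Longrightarrow> a \<in> hom C X Z \<Longrightarrow> b \<in> hom C Z Y \<Longrightarrow> is_zero C (b \<cdot> a)"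
  unfolding is_zero_def by (metis comp_in_hom in_hom_iff)

lemma is_zero_unique:
  assumes "is_zero C h" "is_zero C h'" "h \<in> hom C X Y" "h' \<in> hom C X Y"
  shows "h = h'"
proof -
  obtain Z a b where Z: "zero_obj C Z" and a: "a \<in> hom C X Z" and b: "b \<in> hom C Z Y"
    and h: "h = b \<cdot> a"
    using assms(1,3) by (rule is_zeroE)
  obtain Z' a' b' where Z': "zero_obj C Z'" and a': "a' \<in> hom C X Z'" and b': "b' \<in> hom C Z' Y"
    and h': "h' = b' \<cdot> a'"
    using assms(2,4) by (rule is_zeroE)
  obtain u where u: "u \<in> hom C Z Z'"
    using zero_obj_ex_hom_to[OF Z'] Z unfolding zero_obj_def by blast
  have "u \<cdot> a = a'"
    using zero_obj_hom_to_unique[OF Z' comp_in_hom[OF a u] a'] .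
  moreover have "b' \<cdot> u = b"
    using zero_obj_hom_from_unique[OF Z comp_in_hom[OF u b'] b] .
  ultimately show ?thesis
    using h h' comp_assoc_hom[OF a u b'] by simp
qed

lemma ex_is_zero:
  assumes "X \<in> Ob C" "Y \<in> Ob C"
  shows "\<exists>h \<in> hom C X Y. is_zero C h"
proof -
  obtain Z where Z: "zero_obj C Z"
    using pre_hilbert unfolding pre_hilbert_def by blast
  then obtain a b where "a \<in> hom C X Z" "b \<in> hom C Z Y"
    using assms zero_obj_ex_hom_to zero_obj_ex_hom_from by metis
  then show ?thesis
    using Z comp_in_hom is_zeroI by blast
qed

lemma zero_in_hom: "X \<in> Ob C \<Longrightarrow> Y \<in> Ob C \<Longrightarrow> zero C X Y \<in> hom C X Y"
  and is_zero_zero: "X \<in> Ob C \<Longrightarrow> Y \<in> Ob C \<Longrightarrow> is_zero C (zero C X Y)"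
  using theI'[of "\<lambda>z. z \<in> hom C X Y \<and> is_zero C z"] ex_is_zero is_zero_unique
  unfolding zero_def by blast+

lemma zero_in_Ar [simp]: "X \<in> Ob C \<Longrightarrow> Y \<in> Ob C \<Longrightarrow> zero C X Y \<in> Ar C"
  and dom_zero [simp]: "X \<in> Ob C \<Longrightarrow> Y \<in> Ob C \<Longrightarrow> dom C (zero C X Y) = X"
  and cod_zero [simp]: "X \<in> Ob C \<Longrightarrow> Y \<in> Ob C \<Longrightarrow> cod C (zero C X Y) = Y"
  using zero_in_hom by (simp_all add: in_hom_iff)

lemma zero_unique: "h \<in> hom C X Y \<Longrightarrow> is_zero C h \<Longrightarrow> h = zero C X Y"
  using is_zero_unique zero_in_hom is_zero_zero by (auto simp: in_hom_iff)

lemma is_zero_comp_left: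
  assumes "is_zero C h" "h \<in> hom C X Y" "g \<in> hom C Y W"
  shows "is_zero C (g \<cdot> h)"
proof -
  obtain Z a b where "zero_obj C Z" "a \<in> hom C X Z" "b \<in> hom C Z Y" "h = b \<cdot> a"
    using assms(1,2) by (rule is_zeroE)
  then show ?thesis
    using comp_assoc_hom[of a X Z b Y g W] comp_in_hom[of b Z Y g W] assms(3) is_zeroI by metis
qed

lemma is_zero_comp_right:
  assumes "is_zero C h" "h \<in> hom C Y W" "g \<in> hom C X Y"
  shows "is_zero C (h \<cdot> g)"
proof -
  obtain Z a b where "zero_obj C Z" "a \<in> hom C Y Z" "b \<in> hom C Z W" "h = b \<cdot> a"
    using assms(1,2) by (rule is_zeroE)
  then show ?thesis
    using comp_assoc_hom[of g X Y a Z b W] comp_in_hom[of g X Y a Z] assms(3) is_zeroI by metis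
qed

lemma is_zero_star:
  assumes "is_zero C h" "h \<in> hom C X Y"
  shows "is_zero C (h\<^sup>\<dagger>)"
proof -
  obtain Z a b where "zero_obj C Z" "a \<in> hom C X Z" "b \<in> hom C Z Y" "h = b \<cdot> a"
    using assms by (rule is_zeroE)
  moreover have "(b \<cdot> a)\<^sup>\<dagger> = a\<^sup>\<dagger> \<cdot> b\<^sup>\<dagger>"
    using calculation(2,3) by (simp add: in_hom_iff)
  ultimately show ?thesis
    using star_in_hom is_zeroI by metis
qed

lemma comp_zero_right [simp]:
  assumes "g \<in> Ar C" "dom C g = Y" "X \<in> Ob C"
  shows "g \<cdot> zero C X Y = zero C X (cod C g)"
proof -
  have Y: "Y \<in> Ob C"
    using dom_in_Ob[OF assms(1)] assms(2) by simp
  have g: "g \<in> hom C Y (cod C g)"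
    using assms(1,2) by (simp add: in_hom_iff)
  show ?thesis
    using zero_unique[OF comp_in_hom[OF zero_in_hom[OF assms(3) Y] g]
      is_zero_comp_left[OF is_zero_zero[OF assms(3) Y] zero_in_hom[OF assms(3) Y] g]] .
qed

lemma comp_zero_left [simp]:
  assumes "g \<in> Ar C" "cod C g = X" "Y \<in> Ob C"
  shows "zero C X Y \<cdot> g = zero C (dom C g) Y"
proof -
  have X: "X \<in> Ob C"
    using cod_in_Ob[OF assms(1)] assms(2) by simp
  have g: "g \<in> hom C (dom C g) X"
    using assms(1,2) by (simp add: in_hom_iff)
  show ?thesis
    using zero_unique[OF comp_in_hom[OF g zero_in_hom[OF X assms(3)]]
      is_zero_comp_right[OF is_zero_zero[OF X assms(3)] zero_in_hom[OF X assms(3)] g]] .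
qed

lemma star_zero [simp]:
  assumes "X \<in> Ob C" "Y \<in> Ob C"
  shows "(zero C X Y)\<^sup>\<dagger> = zero C Y X"
  using zero_unique[OF star_in_hom[OF zero_in_hom[OF assms]]
    is_zero_star[OF is_zero_zero[OF assms] zero_in_hom[OF assms]]] .

subsection \<open>Products, coproducts and biproducts\<close>

lemma product_ex1:
  assumes "is_product C A B P r1 r2" "g1 \<in> hom C Z A" "g2 \<in> hom C Z B"
  shows "\<exists>!h. h \<in> hom C Z P \<and> r1 \<cdot> h = g1 \<and> r2 \<cdot> h = g2"
proof -
  have "\<And>Z g1 g2. g1 \<in> hom C Z A \<Longrightarrow> g2 \<in> hom C Z B \<Longrightarrow>
      \<exists>!h. h \<in> hom C Z P \<and> r1 \<cdot> h = g1 \<and> r2 \<cdot> h = g2"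
    using assms(1) unfolding is_product_def by simp
  then show ?thesis
    using assms(2,3) .
qed

lemma coproduct_ex1:
  assumes "is_coproduct C A B S s1 s2" "g1 \<in> hom C A Z" "g2 \<in> hom C B Z"
  shows "\<exists>!h. h \<in> hom C S Z \<and> h \<cdot> s1 = g1 \<and> h \<cdot> s2 = g2"
proof -
  have "\<And>Z g1 g2. g1 \<in> hom C A Z \<Longrightarrow> g2 \<in> hom C B Z \<Longrightarrow>
      \<exists>!h. h \<in> hom C S Z \<and> h \<cdot> s1 = g1 \<and> h \<cdot> s2 = g2"
    using assms(1) unfolding is_coproduct_def by simp
  then show ?thesis
    using assms(2,3) .
qed

lemma productD: "is_product C A B P r1 r2 \<Longrightarrow> P \<in> Ob C \<and> r1 \<in> hom C P A \<and> r2 \<in> hom C P B"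
  by (simp add: is_product_def)

lemma coproductD: "is_coproduct C A B S s1 s2 \<Longrightarrow> S \<in> Ob C \<and> s1 \<in> hom C A S \<and> s2 \<in> hom C B S"
  by (simp add: is_coproduct_def)

lemma product_pair:
  assumes "is_product C A B P r1 r2" "g1 \<in> hom C Z A" "g2 \<in> hom C Z B"
  obtains h where "h \<in> hom C Z P" "r1 \<cdot> h = g1" "r2 \<cdot> h = g2"
  using product_ex1[OF assms] by blast

lemma coproduct_copair:
  assumes "is_coproduct C A B S s1 s2" "g1 \<in> hom C A Z" "g2 \<in> hom C B Z"
  obtains h where "h \<in> hom C S Z" "h \<cdot> s1 = g1" "h \<cdot> s2 = g2"
  using coproduct_ex1[OF assms] by blast

lemma product_eqI:
  assumes P: "is_product C A B P r1 r2" and "x \<in> hom C Z P" "y \<in> hom C Z P"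
    and "r1 \<cdot> x = r1 \<cdot> y" "r2 \<cdot> x = r2 \<cdot> y"
  shows "x = y"
proof -
  have "\<exists>!h. h \<in> hom C Z P \<and> r1 \<cdot> h = r1 \<cdot> x \<and> r2 \<cdot> h = r2 \<cdot> x"
    using product_ex1[OF P] productD[OF P] comp_in_hom assms(2) by blast
  then show ?thesis
    using assms(2-5) by auto
qed

lemma coproduct_eqI:
  assumes S: "is_coproduct C A B S s1 s2" and "x \<in> hom C S Z" "y \<in> hom C S Z"
    and "x \<cdot> s1 = y \<cdot> s1" "x \<cdot> s2 = y \<cdot> s2"
  shows "x = y"
proof -
  have "\<exists>!h. h \<in> hom C S Z \<and> h \<cdot> s1 = x \<cdot> s1 \<and> h \<cdot> s2 = x \<cdot> s2"
    using coproduct_ex1[OF S] coproductD[OF S] comp_in_hom assms(2) by blast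
  then show ?thesis
    using assms(2-5) by auto
qed

lemma coproduct_eqI_star:
  assumes S: "is_coproduct C A B S s1 s2" and x: "x \<in> hom C Z S" and y: "y \<in> hom C Z S"
    and "s1\<^sup>\<dagger> \<cdot> x = s1\<^sup>\<dagger> \<cdot> y" "s2\<^sup>\<dagger> \<cdot> x = s2\<^sup>\<dagger> \<cdot> y"
  shows "x = y"
proof -
  have s: "s1 \<in> hom C A S" "s2 \<in> hom C B S"
    using coproductD[OF S] by auto
  have "(s1\<^sup>\<dagger> \<cdot> x)\<^sup>\<dagger> = (s1\<^sup>\<dagger> \<cdot> y)\<^sup>\<dagger>" "(s2\<^sup>\<dagger> \<cdot> x)\<^sup>\<dagger> = (s2\<^sup>\<dagger> \<cdot> y)\<^sup>\<dagger>"
    using assms(4,5) by simp_all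
  then have "x\<^sup>\<dagger> \<cdot> s1 = y\<^sup>\<dagger> \<cdot> s1" "x\<^sup>\<dagger> \<cdot> s2 = y\<^sup>\<dagger> \<cdot> s2"
    using x y s by (simp_all add: in_hom_iff)
  then have "x\<^sup>\<dagger> = y\<^sup>\<dagger>"
    using coproduct_eqI[OF S star_in_hom[OF x] star_in_hom[OF y]] by simp
  then show ?thesis
    using x y star_inject by (simp add: in_hom_iff)
qed

lemma biproduct_is_product: "is_biproduct C A B P s1 r1 s2 r2 \<Longrightarrow> is_product C A B P r1 r2"
  and biproduct_is_coproduct: "is_biproduct C A B P s1 r1 s2 r2 \<Longrightarrow> is_coproduct C A B P s1 s2"
  by (simp_all add: is_biproduct_def)

lemma biproductD:
  assumes "is_biproduct C A B P s1 r1 s2 r2"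
  shows "P \<in> Ob C" "s1 \<in> hom C A P" "s2 \<in> hom C B P" "r1 \<in> hom C P A" "r2 \<in> hom C P B"
    "r1 \<cdot> s1 = idt C A" "r2 \<cdot> s2 = idt C B" "r2 \<cdot> s1 = zero C A B" "r1 \<cdot> s2 = zero C B A"
    "A \<in> Ob C" "B \<in> Ob C"
proof -
  show hom: "P \<in> Ob C" "s1 \<in> hom C A P" "s2 \<in> hom C B P" "r1 \<in> hom C P A" "r2 \<in> hom C P B"
    "r1 \<cdot> s1 = idt C A" "r2 \<cdot> s2 = idt C B"
    using assms unfolding is_biproduct_def is_product_def is_coproduct_def by auto
  show "A \<in> Ob C" "B \<in> Ob C"
    using hom by (auto simp: in_hom_iff)
  have "is_zero C (r2 \<cdot> s1)" "is_zero C (r1 \<cdot> s2)"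
    using assms unfolding is_biproduct_def by auto
  then show "r2 \<cdot> s1 = zero C A B" "r1 \<cdot> s2 = zero C B A"
    using hom comp_in_hom zero_unique by blast+
qed

lemma biproduct_swap:
  "is_biproduct C A B P s1 r1 s2 r2 \<Longrightarrow> is_biproduct C B A P s2 r2 s1 r1"
  unfolding is_biproduct_def is_product_def is_coproduct_def by (simp add: conj_commute)

lemma ex_ortho_biproduct:
  assumes "A \<in> Ob C" "B \<in> Ob C"
  obtains P s1 s2 where "ortho_biproduct C A B P s1 (s1\<^sup>\<dagger>) s2 (s2\<^sup>\<dagger>)"
  using pre_hilbert assms unfolding pre_hilbert_def by blast

lemma ex_biproduct:
  assumes "A \<in> Ob C" "B \<in> Ob C"
  obtains P s1 s2 where "is_biproduct C A B P s1 (s1\<^sup>\<dagger>) s2 (s2\<^sup>\<dagger>)"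
  using ex_ortho_biproduct[OF assms] unfolding ortho_biproduct_def by blast

lemma biproduct_endo_eqI:
  assumes B: "is_biproduct C A B P s1 r1 s2 r2" and a: "a \<in> hom C P P" and b: "b \<in> hom C P P"
    and "r1 \<cdot> a \<cdot> s1 = r1 \<cdot> b \<cdot> s1" "r2 \<cdot> a \<cdot> s1 = r2 \<cdot> b \<cdot> s1"
    and "r1 \<cdot> a \<cdot> s2 = r1 \<cdot> b \<cdot> s2" "r2 \<cdot> a \<cdot> s2 = r2 \<cdot> b \<cdot> s2"
  shows "a = b"
proof -
  note P = biproduct_is_product[OF B] and S = biproduct_is_coproduct[OF B] and b' = biproductD[OF B]
  have "a \<cdot> s1 = b \<cdot> s1"
    using product_eqI[OF P comp_in_hom[OF b'(2) a] comp_in_hom[OF b'(2) b]] assms(4,5) by blast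
  moreover have "a \<cdot> s2 = b \<cdot> s2"
    using product_eqI[OF P comp_in_hom[OF b'(3) a] comp_in_hom[OF b'(3) b]] assms(6,7) by blast
  ultimately show ?thesis
    using coproduct_eqI[OF S a b] by blast
qed

subsection \<open>The additive structure\<close>

(* By sum_independent_of_biproduct, is_sum C f g has at most one value; for non-parallel f, g the
   sum is unspecified. *)
definition madd :: "'m \<Rightarrow> 'm \<Rightarrow> 'm"  (infixl \<open>\<oplus>\<close> 65)
  where "f \<oplus> g = (THE h. is_sum C f g h)"

lemma biproduct_codiag:
  assumes "is_biproduct C Y Y P s1 r1 s2 r2"
  obtains q where "q \<in> hom C P Y" "q \<cdot> s1 = idt C Y" "q \<cdot> s2 = idt C Y"
  using coproduct_copair[OF biproduct_is_coproduct[OF assms]] id_in_hom biproductD(10)[OF assms]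
  by metis

lemma biproduct_diag:
  assumes "is_biproduct C X X P s1 r1 s2 r2"
  obtains d where "d \<in> hom C X P" "r1 \<cdot> d = idt C X" "r2 \<cdot> d = idt C X"
  using product_pair[OF biproduct_is_product[OF assms]] id_in_hom biproductD(10)[OF assms]
  by metis

lemma sum_independent_of_biproduct:
  assumes B: "is_biproduct C Y Y P s1 r1 s2 r2" and B': "is_biproduct C Y Y Q t1 u1 t2 u2"
    and p: "p \<in> hom C X P" and p': "p' \<in> hom C X Q" "u1 \<cdot> p' = r1 \<cdot> p" "u2 \<cdot> p' = r2 \<cdot> p"
    and q: "q \<in> hom C P Y" "q \<cdot> s1 = idt C Y" "q \<cdot> s2 = idt C Y"
    and q': "q' \<in> hom C Q Y" "q' \<cdot> t1 = idt C Y" "q' \<cdot> t2 = idt C Y"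
  shows "q \<cdot> p = q' \<cdot> p'"
proof -
  note b = biproductD[OF B] and b' = biproductD[OF B']
  note P' = biproduct_is_product[OF B']
  obtain \<phi> where \<phi>: "\<phi> \<in> hom C P Q" "u1 \<cdot> \<phi> = r1" "u2 \<cdot> \<phi> = r2"
    using product_pair[OF P' b(4) b(5)] .
  have "\<phi> \<cdot> s1 = t1"
  proof (rule product_eqI[OF P' comp_in_hom[OF b(2) \<phi>(1)] b'(2)])
    show "u1 \<cdot> \<phi> \<cdot> s1 = u1 \<cdot> t1"
      using comp_assoc_subst[OF b(2) \<phi>(1) b'(4) \<phi>(2)] b(6) b'(6) by simp
    show "u2 \<cdot> \<phi> \<cdot> s1 = u2 \<cdot> t1"
      using comp_assoc_subst[OF b(2) \<phi>(1) b'(5) \<phi>(3)] b(8) b'(8) by simp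
  qed
  moreover have "\<phi> \<cdot> s2 = t2"
  proof (rule product_eqI[OF P' comp_in_hom[OF b(3) \<phi>(1)] b'(3)])
    show "u1 \<cdot> \<phi> \<cdot> s2 = u1 \<cdot> t2"
      using comp_assoc_subst[OF b(3) \<phi>(1) b'(4) \<phi>(2)] b(9) b'(9) by simp
    show "u2 \<cdot> \<phi> \<cdot> s2 = u2 \<cdot> t2"
      using comp_assoc_subst[OF b(3) \<phi>(1) b'(5) \<phi>(3)] b(7) b'(7) by simp
  qed
  ultimately have "q' \<cdot> \<phi> = q"
    using coproduct_eqI[OF biproduct_is_coproduct[OF B] comp_in_hom[OF \<phi>(1) q'(1)] q(1)]
      comp_assoc_hom[OF b(2) \<phi>(1) q'(1)] comp_assoc_hom[OF b(3) \<phi>(1) q'(1)] q(2,3) q'(2,3)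
    by metis
  moreover have "\<phi> \<cdot> p = p'"
  proof (rule product_eqI[OF P' comp_in_hom[OF p \<phi>(1)] p'(1)])
    show "u1 \<cdot> \<phi> \<cdot> p = u1 \<cdot> p'"
      using comp_assoc_subst[OF p \<phi>(1) b'(4) \<phi>(2)] p'(2) by simp
    show "u2 \<cdot> \<phi> \<cdot> p = u2 \<cdot> p'"
      using comp_assoc_subst[OF p \<phi>(1) b'(5) \<phi>(3)] p'(3) by simp
  qed
  ultimately show ?thesis
    using comp_assoc_hom[OF p \<phi>(1) q'(1)] by simp
qed

lemma is_sumI:
  assumes "is_biproduct C Y Y P s1 r1 s2 r2" "p \<in> hom C X P"
    "q \<in> hom C P Y" "q \<cdot> s1 = idt C Y" "q \<cdot> s2 = idt C Y"
  shows "is_sum C (r1 \<cdot> p) (r2 \<cdot> p) (q \<cdot> p)"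
  using assms comp_in_hom biproductD(4,5)[OF assms(1)] unfolding is_sum_def by blast

lemma is_sum_unique:
  assumes "is_sum C f g h" "is_sum C f g h'"
  shows "h = h'"
proof -
  obtain X Y P s1 r1 s2 r2 p q where f: "f \<in> hom C X Y" and B: "is_biproduct C Y Y P s1 r1 s2 r2"
    and p: "p \<in> hom C X P" "r1 \<cdot> p = f" "r2 \<cdot> p = g"
    and q: "q \<in> hom C P Y" "q \<cdot> s1 = idt C Y" "q \<cdot> s2 = idt C Y" and h: "h = q \<cdot> p"
    using assms(1) unfolding is_sum_def by blast
  obtain X' Y' Q t1 u1 t2 u2 p' q' where f': "f \<in> hom C X' Y'"
    and B': "is_biproduct C Y' Y' Q t1 u1 t2 u2"
    and p': "p' \<in> hom C X' Q" "u1 \<cdot> p' = f" "u2 \<cdot> p' = g"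
    and q': "q' \<in> hom C Q Y'" "q' \<cdot> t1 = idt C Y'" "q' \<cdot> t2 = idt C Y'" and h': "h' = q' \<cdot> p'"
    using assms(2) unfolding is_sum_def by blast
  have "X' = X" "Y' = Y"
    using f f' by (simp_all add: in_hom_iff)
  then show ?thesis
    using sum_independent_of_biproduct[OF B _ p(1) _ _ _ q] B' p' q' p q h h' by simp
qed

lemma ex_is_sum:
  assumes f: "f \<in> hom C X Y" and g: "g \<in> hom C X Y"
  shows "\<exists>h. is_sum C f g h"
proof -
  obtain P s1 s2 where B: "is_biproduct C Y Y P s1 (s1\<^sup>\<dagger>) s2 (s2\<^sup>\<dagger>)"
    using ex_biproduct in_hom_Ob(2)[OF f] by metis
  obtain p where "p \<in> hom C X P" "s1\<^sup>\<dagger> \<cdot> p = f" "s2\<^sup>\<dagger> \<cdot> p = g"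
    using product_pair[OF biproduct_is_product[OF B] f g] .
  moreover obtain q where "q \<in> hom C P Y" "q \<cdot> s1 = idt C Y" "q \<cdot> s2 = idt C Y"
    using biproduct_codiag[OF B] .
  ultimately show ?thesis
    using is_sumI[OF B] by metis
qed

lemma madd_eqI: "is_sum C f g h \<Longrightarrow> f \<oplus> g = h"
  unfolding madd_def using is_sum_unique by blast

lemma is_sum_madd: "f \<in> hom C X Y \<Longrightarrow> g \<in> hom C X Y \<Longrightarrow> is_sum C f g (f \<oplus> g)"
  using ex_is_sum madd_eqI by blast

lemma is_sum_iff: "is_sum C f g h \<longleftrightarrow> (\<exists>X Y. f \<in> hom C X Y \<and> g \<in> hom C X Y) \<and> h = f \<oplus> g"
proof
  assume h: "is_sum C f g h"
  then have "\<exists>X Y. f \<in> hom C X Y \<and> g \<in> hom C X Y"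
    unfolding is_sum_def by blast
  with madd_eqI[OF h] show "(\<exists>X Y. f \<in> hom C X Y \<and> g \<in> hom C X Y) \<and> h = f \<oplus> g"
    by simp
qed (use is_sum_madd in blast)

lemma madd_in_hom:
  assumes "f \<in> hom C X Y" "g \<in> hom C X Y"
  shows "f \<oplus> g \<in> hom C X Y"
proof -
  obtain X' Y' P s1 r1 s2 r2 p q where "f \<in> hom C X' Y'"
    and "p \<in> hom C X' P" "q \<in> hom C P Y'" "f \<oplus> g = q \<cdot> p"
    using is_sum_madd[OF assms] unfolding is_sum_def by blast
  then show ?thesis
    using assms(1) comp_in_hom by (auto simp: in_hom_iff)
qed

lemma madd_via_biproduct:
  assumes "is_biproduct C Y Y P s1 r1 s2 r2" "p \<in> hom C X P"
    "q \<in> hom C P Y" "q \<cdot> s1 = idt C Y" "q \<cdot> s2 = idt C Y"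
  shows "q \<cdot> p = r1 \<cdot> p \<oplus> r2 \<cdot> p"
  using madd_eqI[OF is_sumI[OF assms]] by simp

lemma madd_commute: "f \<oplus> g = g \<oplus> f"
proof -
  have "is_sum C g f h" if "is_sum C f g h" for f g h
    using that biproduct_swap unfolding is_sum_def by blast
  then have "is_sum C f g = is_sum C g f"
    by (intro ext) meson
  then show ?thesis
    unfolding madd_def by simp
qed

lemma madd_comp_right:
  assumes f: "f \<in> hom C X Y" and g: "g \<in> hom C X Y" and k: "k \<in> hom C W X"
  shows "(f \<oplus> g) \<cdot> k = f \<cdot> k \<oplus> g \<cdot> k"
proof -
  obtain X' Y' P s1 r1 s2 r2 p q where f': "f \<in> hom C X' Y'"
    and B: "is_biproduct C Y' Y' P s1 r1 s2 r2"
    and p: "p \<in> hom C X' P" "r1 \<cdot> p = f" "r2 \<cdot> p = g"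
    and q: "q \<in> hom C P Y'" "q \<cdot> s1 = idt C Y'" "q \<cdot> s2 = idt C Y'" and h: "f \<oplus> g = q \<cdot> p"
    using is_sum_madd[OF f g] unfolding is_sum_def by blast
  have "X' = X"
    using f f' by (simp add: in_hom_iff)
  note p = p[unfolded this]
  have "q \<cdot> p \<cdot> k = r1 \<cdot> p \<cdot> k \<oplus> r2 \<cdot> p \<cdot> k"
    using madd_via_biproduct[OF B comp_in_hom[OF k p(1)] q] .
  then show ?thesis
    using comp_assoc_hom[OF k p(1)] q(1) biproductD(4,5)[OF B] p h by metis
qed

lemma madd_zero_right:
  assumes f: "f \<in> hom C X Y"
  shows "f \<oplus> zero C X Y = f"
proof -
  note X = in_hom_Ob(1)[OF f] and Y = in_hom_Ob(2)[OF f]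
  obtain P s1 s2 where B: "is_biproduct C Y Y P s1 (s1\<^sup>\<dagger>) s2 (s2\<^sup>\<dagger>)"
    using ex_biproduct[OF Y Y] .
  note b = biproductD[OF B]
  obtain q where q: "q \<in> hom C P Y" "q \<cdot> s1 = idt C Y" "q \<cdot> s2 = idt C Y"
    using biproduct_codiag[OF B] .
  have "q \<cdot> s1 \<cdot> f = s1\<^sup>\<dagger> \<cdot> s1 \<cdot> f \<oplus> s2\<^sup>\<dagger> \<cdot> s1 \<cdot> f"
    using madd_via_biproduct[OF B comp_in_hom[OF f b(2)] q] .
  moreover have "s1\<^sup>\<dagger> \<cdot> s1 \<cdot> f = f" "s2\<^sup>\<dagger> \<cdot> s1 \<cdot> f = zero C X Y" "q \<cdot> s1 \<cdot> f = f"
    using comp_assoc_hom[OF f b(2)] b(4,5,6,8) q f X by (auto simp: in_hom_iff)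
  ultimately show ?thesis
    by simp
qed

lemma madd_zero_left: "f \<in> hom C X Y \<Longrightarrow> zero C X Y \<oplus> f = f"
  using madd_zero_right madd_commute by metis

lemma madd_via_copair:
  assumes B: "is_biproduct C X X P s1 r1 s2 r2" and f: "f \<in> hom C X Y" and g: "g \<in> hom C X Y"
    and c: "c \<in> hom C P Y" "c \<cdot> s1 = f" "c \<cdot> s2 = g"
    and d: "d \<in> hom C X P" "r1 \<cdot> d = idt C X" "r2 \<cdot> d = idt C X"
  shows "c \<cdot> d = f \<oplus> g"
proof -
  note b = biproductD[OF B]
  note X = in_hom_Ob(1)[OF f] and Y = in_hom_Ob(2)[OF f]
  obtain Q t1 t2 where B': "is_biproduct C Y Y Q t1 (t1\<^sup>\<dagger>) t2 (t2\<^sup>\<dagger>)"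
    using ex_biproduct[OF Y Y] .
  note b' = biproductD[OF B'] and P' = biproduct_is_product[OF B']
  obtain M where M: "M \<in> hom C P Q" "t1\<^sup>\<dagger> \<cdot> M = f \<cdot> r1" "t2\<^sup>\<dagger> \<cdot> M = g \<cdot> r2"
    using product_pair[OF P' comp_in_hom[OF b(4) f] comp_in_hom[OF b(5) g]] .
  obtain N where N: "N \<in> hom C Q Y" "N \<cdot> t1 = idt C Y" "N \<cdot> t2 = idt C Y"
    using biproduct_codiag[OF B'] .
  have Ms1: "M \<cdot> s1 = t1 \<cdot> f"
    using product_eqI[OF P' comp_in_hom[OF b(2) M(1)] comp_in_hom[OF f b'(2)]]
      comp_assoc_hom[OF b(2) M(1) b'(4)] comp_assoc_hom[OF b(2) M(1) b'(5)] M
      comp_assoc_hom[OF b(2) b(4) f, symmetric] comp_assoc_hom[OF b(2) b(5) g, symmetric]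
      comp_assoc_hom[OF f b'(2) b'(4)] comp_assoc_hom[OF f b'(2) b'(5)] b b' f g X Y
    by (simp add: in_hom_iff)
  have Ms2: "M \<cdot> s2 = t2 \<cdot> g"
    using product_eqI[OF P' comp_in_hom[OF b(3) M(1)] comp_in_hom[OF g b'(3)]]
      comp_assoc_hom[OF b(3) M(1) b'(4)] comp_assoc_hom[OF b(3) M(1) b'(5)] M
      comp_assoc_hom[OF b(3) b(4) f, symmetric] comp_assoc_hom[OF b(3) b(5) g, symmetric]
      comp_assoc_hom[OF g b'(3) b'(4)] comp_assoc_hom[OF g b'(3) b'(5)] b b' f g X Y
    by (simp add: in_hom_iff)
  have NM: "N \<cdot> M = c"
    using coproduct_eqI[OF biproduct_is_coproduct[OF B] comp_in_hom[OF M(1) N(1)] c(1)]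
      comp_assoc_hom[OF b(2) M(1) N(1), symmetric] comp_assoc_hom[OF b(3) M(1) N(1), symmetric]
      Ms1 Ms2 comp_assoc_hom[OF f b'(2) N(1)] comp_assoc_hom[OF g b'(3) N(1)] N c f g
    by (simp add: in_hom_iff)
  have "N \<cdot> M \<cdot> d = t1\<^sup>\<dagger> \<cdot> M \<cdot> d \<oplus> t2\<^sup>\<dagger> \<cdot> M \<cdot> d"
    using madd_via_biproduct[OF B' comp_in_hom[OF d(1) M(1)] N] .
  also have "\<dots> = f \<oplus> g"
    using comp_assoc_subst[OF d(1) M(1) b'(4) M(2)] comp_assoc_subst[OF d(1) M(1) b'(5) M(3)]
      comp_assoc_hom[OF d(1) b(4) f] comp_assoc_hom[OF d(1) b(5) g] d f g
    by (simp add: in_hom_iff)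
  finally show ?thesis
    using comp_assoc_subst[OF d(1) M(1) N(1) NM] by simp
qed

lemma madd_comp_left:
  assumes f: "f \<in> hom C X Y" and g: "g \<in> hom C X Y" and h: "h \<in> hom C Y Z"
  shows "h \<cdot> (f \<oplus> g) = h \<cdot> f \<oplus> h \<cdot> g"
proof -
  note X = in_hom_Ob(1)[OF f]
  obtain P s1 s2 where B: "is_biproduct C X X P s1 (s1\<^sup>\<dagger>) s2 (s2\<^sup>\<dagger>)"
    using ex_biproduct[OF X X] .
  note b = biproductD[OF B]
  obtain k where k: "k \<in> hom C P Y" "k \<cdot> s1 = f" "k \<cdot> s2 = g"
    using coproduct_copair[OF biproduct_is_coproduct[OF B] f g] .
  obtain d where d: "d \<in> hom C X P" "s1\<^sup>\<dagger> \<cdot> d = idt C X" "s2\<^sup>\<dagger> \<cdot> d = idt C X"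
    using biproduct_diag[OF B] .
  have "f \<oplus> g = k \<cdot> d"
    using madd_via_copair[OF B f g k d] by simp
  moreover have "h \<cdot> f \<oplus> h \<cdot> g = (h \<cdot> k) \<cdot> d"
    using madd_via_copair[OF B comp_in_hom[OF f h] comp_in_hom[OF g h] comp_in_hom[OF k(1) h] _ _ d]
      comp_assoc_hom[OF b(2) k(1) h] comp_assoc_hom[OF b(3) k(1) h] k
    by simp
  ultimately show ?thesis
    using comp_assoc_hom[OF d(1) k(1) h] by simp
qed

lemma star_madd:
  assumes f: "f \<in> hom C X Y" and g: "g \<in> hom C X Y"
  shows "(f \<oplus> g)\<^sup>\<dagger> = f\<^sup>\<dagger> \<oplus> g\<^sup>\<dagger>"
proof -
  note Y = in_hom_Ob(2)[OF f]
  obtain P s1 s2 where B: "is_biproduct C Y Y P s1 (s1\<^sup>\<dagger>) s2 (s2\<^sup>\<dagger>)"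
    using ex_biproduct[OF Y Y] .
  note b = biproductD[OF B]
  obtain p where p: "p \<in> hom C X P" "s1\<^sup>\<dagger> \<cdot> p = f" "s2\<^sup>\<dagger> \<cdot> p = g"
    using product_pair[OF biproduct_is_product[OF B] f g] .
  obtain q where q: "q \<in> hom C P Y" "q \<cdot> s1 = idt C Y" "q \<cdot> s2 = idt C Y"
    using biproduct_codiag[OF B] .
  have "f \<oplus> g = q \<cdot> p"
    using madd_via_biproduct[OF B p(1) q] p by simp
  then have "(f \<oplus> g)\<^sup>\<dagger> = p\<^sup>\<dagger> \<cdot> q\<^sup>\<dagger>"
    using p q by (simp add: in_hom_iff)
  moreover have "p\<^sup>\<dagger> \<cdot> s1 = f\<^sup>\<dagger>" "p\<^sup>\<dagger> \<cdot> s2 = g\<^sup>\<dagger>"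
    using star_comp[of p "s1\<^sup>\<dagger>"] star_comp[of p "s2\<^sup>\<dagger>"] p b by (simp_all add: in_hom_iff)
  moreover have "s1\<^sup>\<dagger> \<cdot> q\<^sup>\<dagger> = idt C Y" "s2\<^sup>\<dagger> \<cdot> q\<^sup>\<dagger> = idt C Y"
    using star_comp[of s1 q] star_comp[of s2 q] q b Y by (simp_all add: in_hom_iff)
  ultimately show ?thesis
    using madd_via_copair[OF B star_in_hom[OF f] star_in_hom[OF g] star_in_hom[OF p(1)] _ _
        star_in_hom[OF q(1)]] by simp
qed

lemma madd_interchange:
  assumes a: "a \<in> hom C X Y" and b: "b \<in> hom C X Y" and c: "c \<in> hom C X Y" and d: "d \<in> hom C X Y"
  shows "(a \<oplus> b) \<oplus> (c \<oplus> d) = (a \<oplus> c) \<oplus> (b \<oplus> d)"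
proof -
  note X = in_hom_Ob(1)[OF a] and Y = in_hom_Ob(2)[OF a]
  obtain P s1 s2 where BX: "is_biproduct C X X P s1 (s1\<^sup>\<dagger>) s2 (s2\<^sup>\<dagger>)"
    using ex_biproduct[OF X X] .
  obtain Q t1 t2 where BY: "is_biproduct C Y Y Q t1 (t1\<^sup>\<dagger>) t2 (t2\<^sup>\<dagger>)"
    using ex_biproduct[OF Y Y] .
  note x = biproductD[OF BX] and y = biproductD[OF BY]
  obtain kab where kab: "kab \<in> hom C P Y" "kab \<cdot> s1 = a" "kab \<cdot> s2 = b"
    using coproduct_copair[OF biproduct_is_coproduct[OF BX] a b] .
  obtain kcd where kcd: "kcd \<in> hom C P Y" "kcd \<cdot> s1 = c" "kcd \<cdot> s2 = d"
    using coproduct_copair[OF biproduct_is_coproduct[OF BX] c d] .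
  obtain \<delta> where \<delta>: "\<delta> \<in> hom C X P" "s1\<^sup>\<dagger> \<cdot> \<delta> = idt C X" "s2\<^sup>\<dagger> \<cdot> \<delta> = idt C X"
    using biproduct_diag[OF BX] .
  obtain M where M: "M \<in> hom C P Q" "t1\<^sup>\<dagger> \<cdot> M = kab" "t2\<^sup>\<dagger> \<cdot> M = kcd"
    using product_pair[OF biproduct_is_product[OF BY] kab(1) kcd(1)] .
  obtain N where N: "N \<in> hom C Q Y" "N \<cdot> t1 = idt C Y" "N \<cdot> t2 = idt C Y"
    using biproduct_codiag[OF BY] .
  have "t1\<^sup>\<dagger> \<cdot> M \<cdot> \<delta> = a \<oplus> b" "t2\<^sup>\<dagger> \<cdot> M \<cdot> \<delta> = c \<oplus> d"
    using comp_assoc_subst[OF \<delta>(1) M(1) y(4) M(2)] comp_assoc_subst[OF \<delta>(1) M(1) y(5) M(3)]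
      madd_via_copair[OF BX a b kab \<delta>] madd_via_copair[OF BX c d kcd \<delta>] by simp_all
  then have L: "N \<cdot> M \<cdot> \<delta> = (a \<oplus> b) \<oplus> (c \<oplus> d)"
    using madd_via_biproduct[OF BY comp_in_hom[OF \<delta>(1) M(1)] N] by simp
  have "t1\<^sup>\<dagger> \<cdot> M \<cdot> s1 = a" "t2\<^sup>\<dagger> \<cdot> M \<cdot> s1 = c" "t1\<^sup>\<dagger> \<cdot> M \<cdot> s2 = b" "t2\<^sup>\<dagger> \<cdot> M \<cdot> s2 = d"
    using comp_assoc_subst[OF x(2) M(1) y(4) M(2)] comp_assoc_subst[OF x(2) M(1) y(5) M(3)]
      comp_assoc_subst[OF x(3) M(1) y(4) M(2)] comp_assoc_subst[OF x(3) M(1) y(5) M(3)] kab kcd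
    by simp_all
  then have "(N \<cdot> M) \<cdot> s1 = a \<oplus> c" "(N \<cdot> M) \<cdot> s2 = b \<oplus> d"
    using madd_via_biproduct[OF BY comp_in_hom[OF x(2) M(1)] N]
      madd_via_biproduct[OF BY comp_in_hom[OF x(3) M(1)] N]
      comp_assoc_hom[OF x(2) M(1) N(1)] comp_assoc_hom[OF x(3) M(1) N(1)] by simp_all
  then have R: "(N \<cdot> M) \<cdot> \<delta> = (a \<oplus> c) \<oplus> (b \<oplus> d)"
    using madd_via_copair[OF BX madd_in_hom[OF a c] madd_in_hom[OF b d] comp_in_hom[OF M(1) N(1)]
        _ _ \<delta>] by simp
  show ?thesis
    using L R comp_assoc_hom[OF \<delta>(1) M(1) N(1)] by simp
qed

lemma madd_assoc:
  assumes a: "a \<in> hom C X Y" and b: "b \<in> hom C X Y" and c: "c \<in> hom C X Y"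
  shows "(a \<oplus> b) \<oplus> c = a \<oplus> (b \<oplus> c)"
proof -
  note z = zero_in_hom[OF in_hom_Ob[OF a]]
  have "(a \<oplus> b) \<oplus> c = (a \<oplus> b) \<oplus> (zero C X Y \<oplus> c)"
    using madd_zero_left[OF c] by simp
  also have "\<dots> = (a \<oplus> zero C X Y) \<oplus> (b \<oplus> c)"
    by (rule madd_interchange[OF a b z c])
  also have "\<dots> = a \<oplus> (b \<oplus> c)"
    using madd_zero_right[OF a] by simp
  finally show ?thesis .
qed

lemma madd_left_commute:
  "a \<in> hom C X Y \<Longrightarrow> b \<in> hom C X Y \<Longrightarrow> c \<in> hom C X Y \<Longrightarrow> a \<oplus> (b \<oplus> c) = b \<oplus> (a \<oplus> c)"
  using madd_assoc madd_commute by metis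

lemma biproduct_id_eq_madd:
  assumes B: "is_biproduct C A B P s1 r1 s2 r2"
  shows "s1 \<cdot> r1 \<oplus> s2 \<cdot> r2 = idt C P"
proof -
  note b = biproductD[OF B]
  have h: "s1 \<cdot> r1 \<in> hom C P P" "s2 \<cdot> r2 \<in> hom C P P"
    using comp_in_hom b by blast+
  have "(s1 \<cdot> r1 \<oplus> s2 \<cdot> r2) \<cdot> s1 = s1 \<oplus> zero C A P"
    using madd_comp_right[OF h b(2)] comp_assoc_hom[OF b(2) b(4) b(2)]
      comp_assoc_hom[OF b(2) b(5) b(3)] b by (simp add: in_hom_iff)
  moreover have "(s1 \<cdot> r1 \<oplus> s2 \<cdot> r2) \<cdot> s2 = zero C B P \<oplus> s2"
    using madd_comp_right[OF h b(3)] comp_assoc_hom[OF b(3) b(4) b(2)]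
      comp_assoc_hom[OF b(3) b(5) b(3)] b by (simp add: in_hom_iff)
  ultimately show ?thesis
    using coproduct_eqI[OF biproduct_is_coproduct[OF B] madd_in_hom[OF h] id_in_hom[OF b(1)]]
      madd_zero_right[OF b(2)] madd_zero_left[OF b(3)] b by (simp add: in_hom_iff)
qed

lemma coproduct_id_eq_madd:
  assumes cop: "is_coproduct C X Y S s1 s2"
    and h: "h \<in> hom C S X" "h \<cdot> s1 = idt C X" "h \<cdot> s2 = zero C Y X"
    and g: "g \<in> hom C S Y" "g \<cdot> s1 = zero C X Y" "g \<cdot> s2 = idt C Y"
  shows "s1 \<cdot> h \<oplus> s2 \<cdot> g = idt C S"
proof -
  have s: "S \<in> Ob C" "s1 \<in> hom C X S" "s2 \<in> hom C Y S"
    using coproductD[OF cop] by auto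
  note X = in_hom_Ob(1)[OF s(2)] and Y = in_hom_Ob(1)[OF s(3)]
  have sh: "s1 \<cdot> h \<in> hom C S S" and sg: "s2 \<cdot> g \<in> hom C S S"
    using comp_in_hom h g s by blast+
  show ?thesis
  proof (rule coproduct_eqI[OF cop madd_in_hom[OF sh sg] id_in_hom[OF s(1)]])
    show "(s1 \<cdot> h \<oplus> s2 \<cdot> g) \<cdot> s1 = idt C S \<cdot> s1"
      using madd_comp_right[OF sh sg s(2)] comp_assoc_hom[OF s(2) h(1) s(2)]
        comp_assoc_hom[OF s(2) g(1) s(3)] h g madd_zero_right[OF s(2)] s X
      by (simp add: in_hom_iff)
    show "(s1 \<cdot> h \<oplus> s2 \<cdot> g) \<cdot> s2 = idt C S \<cdot> s2"
      using madd_comp_right[OF sh sg s(3)] comp_assoc_hom[OF s(3) h(1) s(2)]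
        comp_assoc_hom[OF s(3) g(1) s(3)] h g madd_zero_left[OF s(3)] s Y
      by (simp add: in_hom_iff)
  qed
qed

lemma comp_madd_comp:
  assumes "a \<in> hom C X A" "b \<in> hom C X B" "u \<in> hom C A S" "v \<in> hom C B S" "h \<in> hom C S Z"
  shows "h \<cdot> (u \<cdot> a \<oplus> v \<cdot> b) = (h \<cdot> u) \<cdot> a \<oplus> (h \<cdot> v) \<cdot> b"
  using madd_comp_left[OF comp_in_hom[OF assms(1,3)] comp_in_hom[OF assms(2,4)] assms(5)]
    comp_assoc_hom[OF assms(1,3,5)] comp_assoc_hom[OF assms(2,4,5)] by simp

lemma comp_split:
  assumes "p \<in> hom C S S" "q \<in> hom C S S" "p \<oplus> q = idt C S" "a \<in> hom C S Z" "b \<in> hom C W S"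
  shows "a \<cdot> b = a \<cdot> p \<cdot> b \<oplus> a \<cdot> q \<cdot> b"
proof -
  have "a \<cdot> b = a \<cdot> (p \<oplus> q) \<cdot> b"
    using assms by (simp add: in_hom_iff)
  then show ?thesis
    using madd_comp_right[OF assms(1,2,5)] madd_comp_left[OF comp_in_hom comp_in_hom assms(4)]
      assms(1,2,5) by metis
qed

lemma biproduct_comp_expand:
  assumes B: "is_biproduct C A B P s1 r1 s2 r2" and y: "y \<in> hom C P Z" and x: "x \<in> hom C W P"
  shows "y \<cdot> x = (y \<cdot> s1) \<cdot> (r1 \<cdot> x) \<oplus> (y \<cdot> s2) \<cdot> (r2 \<cdot> x)"
proof -
  note b = biproductD[OF B]
  have "y \<cdot> x = y \<cdot> (s1 \<cdot> r1) \<cdot> x \<oplus> y \<cdot> (s2 \<cdot> r2) \<cdot> x"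
    using comp_split[OF comp_in_hom[OF b(4) b(2)] comp_in_hom[OF b(5) b(3)] biproduct_id_eq_madd[OF B] y x] .
  then show ?thesis
    using b x y by (simp add: in_hom_iff comp_assoc)
qed

subsection \<open>Kernels and negatives\<close>

lemma kernelD:
  assumes k: "is_kernel C k f" and f: "f \<in> hom C A B" and kK: "k \<in> hom C K A"
  shows "f \<cdot> k = zero C K B"
    and "x \<in> hom C W A \<Longrightarrow> f \<cdot> x = zero C W B \<Longrightarrow> \<exists>!h. h \<in> hom C W K \<and> k \<cdot> h = x"
proof -
  have dom: "dom C k = K" "dom C f = A" "cod C f = B"
    using f kK by (simp_all add: in_hom_iff)
  have "is_zero C (f \<cdot> k)"
    using k unfolding is_kernel_def by blast
  then show "f \<cdot> k = zero C K B"
    using zero_unique comp_in_hom[OF kK f] by blast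
  assume x: "x \<in> hom C W A" and fx: "f \<cdot> x = zero C W B"
  have "is_zero C (f \<cdot> x)"
    using fx is_zero_zero in_hom_Ob[OF x] in_hom_Ob[OF f] by simp
  then show "\<exists>!h. h \<in> hom C W K \<and> k \<cdot> h = x"
    using k x unfolding is_kernel_def dom by blast
qed

lemma kernel_factor:
  assumes "is_kernel C k f" "f \<in> hom C A B" "k \<in> hom C K A" "x \<in> hom C W A" "f \<cdot> x = zero C W B"
  obtains h where "h \<in> hom C W K" "k \<cdot> h = x"
  using kernelD(2)[OF assms] by blast

lemma ex_isometric_kernel:
  assumes "f \<in> hom C A B"
  obtains K k where "k \<in> hom C K A" "is_kernel C k f" "isometry C k"
proof -
  obtain k where "is_kernel C k f" "isometry C k"
    using pre_hilbert assms unfolding pre_hilbert_def in_hom_iff by blast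
  moreover have "k \<in> hom C (dom C k) A"
    using calculation(1) assms unfolding is_kernel_def in_hom_iff by simp
  ultimately show ?thesis
    using that by blast
qed

lemma diagonal_is_kernel:
  assumes "ortho_biproduct C X X P s1 r1 s2 r2" "d \<in> hom C X P" "r1 \<cdot> d = idt C X" "r2 \<cdot> d = idt C X"
  shows "\<exists>g. is_kernel C d g"
  using pre_hilbert assms in_hom_Ob(1)[OF assms(2)] unfolding pre_hilbert_def by blast

(* Negatives: the components a, b of an isometric kernel of the codiagonal X \<oplus> X -> X satisfy
   a + b = 0; as the diagonal is a kernel, also a a* + a a* = 1, whence 1 + b a* + b a* = 0. *)
lemma codiag_kernel_components:
  assumes B: "is_biproduct C X X P j1 (j1\<^sup>\<dagger>) j2 (j2\<^sup>\<dagger>)"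
    and q: "q \<in> hom C P X" "q \<cdot> j1 = idt C X" "q \<cdot> j2 = idt C X"
    and n: "n \<in> hom C N P" "q \<cdot> n = zero C N X" "n\<^sup>\<dagger> \<cdot> n = idt C N"
  defines "a \<equiv> j1\<^sup>\<dagger> \<cdot> n" and "b \<equiv> j2\<^sup>\<dagger> \<cdot> n"
  shows "a \<oplus> b = zero C N X" and "a\<^sup>\<dagger> \<cdot> a \<oplus> a\<^sup>\<dagger> \<cdot> a = idt C N"
proof -
  note j = biproductD[OF B]
  note X = j(10) and N = in_hom_Ob(1)[OF n(1)]
  have a: "a \<in> hom C N X" and b: "b \<in> hom C N X"
    unfolding a_def b_def using comp_in_hom n(1) j(4,5) by blast+
  have ast: "a\<^sup>\<dagger> = n\<^sup>\<dagger> \<cdot> j1" and bst: "b\<^sup>\<dagger> = n\<^sup>\<dagger> \<cdot> j2"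
    unfolding a_def b_def using n(1) j by (simp_all add: in_hom_iff)
  show ab: "a \<oplus> b = zero C N X"
    using madd_via_biproduct[OF B n(1) q] n(2) unfolding a_def b_def by simp
  have ab': "a\<^sup>\<dagger> \<oplus> b\<^sup>\<dagger> = zero C X N"
    using star_madd[OF a b] ab X N by simp
  have aa: "a\<^sup>\<dagger> \<cdot> a \<in> hom C N N" and ab'': "a\<^sup>\<dagger> \<cdot> b \<in> hom C N N" and bb: "b\<^sup>\<dagger> \<cdot> b \<in> hom C N N"
    using comp_in_hom star_in_hom a b by blast+
  have "a\<^sup>\<dagger> \<cdot> a = a\<^sup>\<dagger> \<cdot> a \<oplus> (a\<^sup>\<dagger> \<oplus> b\<^sup>\<dagger>) \<cdot> b"
    using ab' madd_zero_right[OF aa] b X N by (simp add: in_hom_iff)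
  also have "\<dots> = (a\<^sup>\<dagger> \<cdot> a \<oplus> a\<^sup>\<dagger> \<cdot> b) \<oplus> b\<^sup>\<dagger> \<cdot> b"
    using madd_comp_right[OF star_in_hom[OF a] star_in_hom[OF b] b] madd_assoc[OF aa ab'' bb] by simp
  also have "\<dots> = b\<^sup>\<dagger> \<cdot> b"
    using madd_comp_left[OF a b star_in_hom[OF a]] ab madd_zero_left[OF bb] a N X
    by (simp add: in_hom_iff)
  finally have "a\<^sup>\<dagger> \<cdot> a = b\<^sup>\<dagger> \<cdot> b" .
  moreover have "n\<^sup>\<dagger> \<cdot> n = a\<^sup>\<dagger> \<cdot> a \<oplus> b\<^sup>\<dagger> \<cdot> b"
    using biproduct_comp_expand[OF B star_in_hom[OF n(1)] n(1)] ast bst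
    unfolding a_def b_def by simp
  ultimately show "a\<^sup>\<dagger> \<cdot> a \<oplus> a\<^sup>\<dagger> \<cdot> a = idt C N"
    using n(3) by simp
qed

lemma codiag_kernel_factors_through_diag:
  assumes B: "ortho_biproduct C X X P j1 (j1\<^sup>\<dagger>) j2 (j2\<^sup>\<dagger>)"
    and q: "q \<in> hom C P X" "q \<cdot> j1 = idt C X" "q \<cdot> j2 = idt C X"
    and n: "is_kernel C n q" "n \<in> hom C N P"
    and x: "x \<in> hom C W P" "n\<^sup>\<dagger> \<cdot> x = zero C W N"
  obtains u where "u \<in> hom C W X" "q\<^sup>\<dagger> \<cdot> u = x"
proof -
  have "is_biproduct C X X P j1 (j1\<^sup>\<dagger>) j2 (j2\<^sup>\<dagger>)"
    using B unfolding ortho_biproduct_def by blast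
  note j = biproductD[OF this]
  note X = j(10) and W = in_hom_Ob(1)[OF x(1)] and N = in_hom_Ob(1)[OF n(2)]
  have D: "q\<^sup>\<dagger> \<in> hom C X P" "j1\<^sup>\<dagger> \<cdot> q\<^sup>\<dagger> = idt C X" "j2\<^sup>\<dagger> \<cdot> q\<^sup>\<dagger> = idt C X"
    using star_in_hom[OF q(1)] star_comp[of j1 q] star_comp[of j2 q] q j X
    by (simp_all add: in_hom_iff)
  obtain g where g: "is_kernel C (q\<^sup>\<dagger>) g"
    using diagonal_is_kernel[OF B D] by blast
  define Z where "Z = cod C g"
  have gh: "g \<in> hom C P Z"
    using g D(1) unfolding is_kernel_def Z_def in_hom_iff by auto
  note Z = in_hom_Ob(2)[OF gh]
  have "(g \<cdot> q\<^sup>\<dagger>)\<^sup>\<dagger> = (zero C X Z)\<^sup>\<dagger>"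
    using kernelD(1)[OF g gh D(1)] by simp
  then have "q \<cdot> g\<^sup>\<dagger> = zero C Z X"
    using gh q(1) X Z by (simp add: in_hom_iff)
  then obtain t where t: "t \<in> hom C Z N" "n \<cdot> t = g\<^sup>\<dagger>"
    using kernel_factor[OF n(1) q(1) n(2) star_in_hom[OF gh]] by blast
  have "g = t\<^sup>\<dagger> \<cdot> n\<^sup>\<dagger>"
    using t gh n(2) by (metis in_hom_iff star_comp star_star)
  then have "g \<cdot> x = t\<^sup>\<dagger> \<cdot> n\<^sup>\<dagger> \<cdot> x"
    using comp_assoc_hom[OF x(1) star_in_hom[OF n(2)] star_in_hom[OF t(1)]] by simp
  also have "\<dots> = zero C W Z"
    using x(2) t(1) W N Z by (simp add: in_hom_iff)
  finally show ?thesis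
    using kernel_factor[OF g gh D(1) x(1)] that by blast
qed

lemma opposite_pair_annihilates:
  assumes a: "a \<in> hom C N X" and b: "b \<in> hom C N X"
    and ab: "a \<oplus> b = zero C N X" and aa: "a\<^sup>\<dagger> \<cdot> a \<oplus> a\<^sup>\<dagger> \<cdot> a = idt C N"
  shows "a\<^sup>\<dagger> \<oplus> b\<^sup>\<dagger> \<cdot> (a \<cdot> a\<^sup>\<dagger> \<oplus> a \<cdot> a\<^sup>\<dagger>) = zero C X N"
proof -
  note X = in_hom_Ob(2)[OF a] and N = in_hom_Ob(1)[OF a]
  define e where "e = a \<cdot> a\<^sup>\<dagger>"
  have e: "e \<in> hom C X X"
    unfolding e_def using comp_in_hom star_in_hom a by blast
  have ae: "a\<^sup>\<dagger> \<cdot> e \<in> hom C X N" and be: "b\<^sup>\<dagger> \<cdot> e \<in> hom C X N"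
    using comp_in_hom star_in_hom a b e by blast+
  have aa': "a\<^sup>\<dagger> \<cdot> a \<in> hom C N N"
    using comp_in_hom star_in_hom a by blast
  have "a\<^sup>\<dagger> = (a\<^sup>\<dagger> \<cdot> a \<oplus> a\<^sup>\<dagger> \<cdot> a) \<cdot> a\<^sup>\<dagger>"
    using aa a by (simp add: in_hom_iff)
  also have "\<dots> = a\<^sup>\<dagger> \<cdot> e \<oplus> a\<^sup>\<dagger> \<cdot> e"
    using madd_comp_right[OF aa' aa' star_in_hom[OF a]] a unfolding e_def
    by (simp add: in_hom_iff comp_assoc)
  finally have "a\<^sup>\<dagger> \<oplus> b\<^sup>\<dagger> \<cdot> (e \<oplus> e) = (a\<^sup>\<dagger> \<cdot> e \<oplus> a\<^sup>\<dagger> \<cdot> e) \<oplus> (b\<^sup>\<dagger> \<cdot> e \<oplus> b\<^sup>\<dagger> \<cdot> e)"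
    using madd_comp_left[OF e e star_in_hom[OF b]] by simp
  also have "\<dots> = (a\<^sup>\<dagger> \<cdot> e \<oplus> b\<^sup>\<dagger> \<cdot> e) \<oplus> (a\<^sup>\<dagger> \<cdot> e \<oplus> b\<^sup>\<dagger> \<cdot> e)"
    using madd_interchange[OF ae ae be be] .
  also have "a\<^sup>\<dagger> \<cdot> e \<oplus> b\<^sup>\<dagger> \<cdot> e = (a \<oplus> b)\<^sup>\<dagger> \<cdot> e"
    using madd_comp_right[OF star_in_hom[OF a] star_in_hom[OF b] e] star_madd[OF a b] by simp
  also have "\<dots> = zero C X N"
    using ab e X N by (simp add: in_hom_iff)
  finally show ?thesis
    unfolding e_def using madd_zero_left[OF zero_in_hom[OF X N]] by simp
qed

lemma opposite_pair_neg_id: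
  assumes a: "a \<in> hom C N X" and b: "b \<in> hom C N X"
    and ab: "a \<oplus> b = zero C N X" and aa: "a \<cdot> a\<^sup>\<dagger> \<oplus> a \<cdot> a\<^sup>\<dagger> = idt C X"
  shows "idt C X \<oplus> (b \<cdot> a\<^sup>\<dagger> \<oplus> b \<cdot> a\<^sup>\<dagger>) = zero C X X"
proof -
  note X = in_hom_Ob(2)[OF a] and N = in_hom_Ob(1)[OF a]
  have ea: "a \<cdot> a\<^sup>\<dagger> \<in> hom C X X" and eb: "b \<cdot> a\<^sup>\<dagger> \<in> hom C X X"
    using comp_in_hom star_in_hom a b by blast+
  have "idt C X \<oplus> (b \<cdot> a\<^sup>\<dagger> \<oplus> b \<cdot> a\<^sup>\<dagger>) = (a \<cdot> a\<^sup>\<dagger> \<oplus> b \<cdot> a\<^sup>\<dagger>) \<oplus> (a \<cdot> a\<^sup>\<dagger> \<oplus> b \<cdot> a\<^sup>\<dagger>)"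
    using madd_interchange[OF ea ea eb eb] aa by simp
  also have "a \<cdot> a\<^sup>\<dagger> \<oplus> b \<cdot> a\<^sup>\<dagger> = zero C X X"
    using madd_comp_right[OF a b star_in_hom[OF a]] ab a X N by (simp add: in_hom_iff)
  finally show ?thesis
    using madd_zero_left[OF zero_in_hom[OF X X]] by simp
qed

lemma codiag_kernel_component_doubled:
  assumes OB: "ortho_biproduct C X X P j1 (j1\<^sup>\<dagger>) j2 (j2\<^sup>\<dagger>)"
    and q: "q \<in> hom C P X" "q \<cdot> j1 = idt C X" "q \<cdot> j2 = idt C X"
    and n: "n \<in> hom C N P" "is_kernel C n q" "isometry C n"
  defines "a \<equiv> j1\<^sup>\<dagger> \<cdot> n"
  shows "a \<cdot> a\<^sup>\<dagger> \<oplus> a \<cdot> a\<^sup>\<dagger> = idt C X"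
proof -
  have B: "is_biproduct C X X P j1 (j1\<^sup>\<dagger>) j2 (j2\<^sup>\<dagger>)"
    using OB unfolding ortho_biproduct_def by blast
  note j = biproductD[OF B]
  note X = j(10)
  define b where "b = j2\<^sup>\<dagger> \<cdot> n"
  have a: "a \<in> hom C N X" and b: "b \<in> hom C N X"
    unfolding a_def b_def using comp_in_hom n(1) j(4,5) by blast+
  have ab: "a \<oplus> b = zero C N X" and aa: "a\<^sup>\<dagger> \<cdot> a \<oplus> a\<^sup>\<dagger> \<cdot> a = idt C N"
    using codiag_kernel_components[OF B q n(1) kernelD(1)[OF n(2) q(1) n(1)] isometryD[OF n(3,1)]]
    unfolding a_def b_def by blast+
  define w where "w = a \<cdot> a\<^sup>\<dagger> \<oplus> a \<cdot> a\<^sup>\<dagger>"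
  have w: "w \<in> hom C X X"
    unfolding w_def using madd_in_hom comp_in_hom star_in_hom a by blast
  obtain x where x: "x \<in> hom C X P" "j1\<^sup>\<dagger> \<cdot> x = idt C X" "j2\<^sup>\<dagger> \<cdot> x = w"
    using product_pair[OF biproduct_is_product[OF B] id_in_hom[OF X] w] .
  have "n\<^sup>\<dagger> \<cdot> x = (n\<^sup>\<dagger> \<cdot> j1) \<cdot> idt C X \<oplus> (n\<^sup>\<dagger> \<cdot> j2) \<cdot> w"
    using biproduct_comp_expand[OF B star_in_hom[OF n(1)] x(1)] x by simp
  also have "\<dots> = a\<^sup>\<dagger> \<oplus> b\<^sup>\<dagger> \<cdot> w"
    using n(1) j unfolding a_def b_def by (simp add: in_hom_iff)
  also have "\<dots> = zero C X N"
    using opposite_pair_annihilates[OF a b ab aa] unfolding w_def .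
  finally obtain u where u: "u \<in> hom C X X" "q\<^sup>\<dagger> \<cdot> u = x"
    using codiag_kernel_factors_through_diag[OF OB q n(2,1) x(1)] by blast
  have "j1\<^sup>\<dagger> \<cdot> q\<^sup>\<dagger> = idt C X" "j2\<^sup>\<dagger> \<cdot> q\<^sup>\<dagger> = idt C X"
    using star_comp[of j1 q] star_comp[of j2 q] q j X by (simp_all add: in_hom_iff)
  then have "u = idt C X" "w = u"
    using comp_assoc_subst[OF u(1) star_in_hom[OF q(1)] j(4)]
      comp_assoc_subst[OF u(1) star_in_hom[OF q(1)] j(5)] u x(2,3)
    by (simp_all add: in_hom_iff)
  then show ?thesis
    unfolding w_def by simp
qed

lemma ex_neg_id:
  assumes X: "X \<in> Ob C"
  obtains v where "v \<in> hom C X X" "idt C X \<oplus> v = zero C X X"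
proof -
  obtain P j1 j2 where OB: "ortho_biproduct C X X P j1 (j1\<^sup>\<dagger>) j2 (j2\<^sup>\<dagger>)"
    using ex_ortho_biproduct[OF X X] .
  then have B: "is_biproduct C X X P j1 (j1\<^sup>\<dagger>) j2 (j2\<^sup>\<dagger>)"
    unfolding ortho_biproduct_def by blast
  note j = biproductD[OF B]
  obtain q where q: "q \<in> hom C P X" "q \<cdot> j1 = idt C X" "q \<cdot> j2 = idt C X"
    using biproduct_codiag[OF B] .
  obtain N n where n: "n \<in> hom C N P" "is_kernel C n q" "isometry C n"
    using ex_isometric_kernel[OF q(1)] .
  have a: "j1\<^sup>\<dagger> \<cdot> n \<in> hom C N X" and b: "j2\<^sup>\<dagger> \<cdot> n \<in> hom C N X"
    using comp_in_hom n(1) j(4,5) by blast+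
  show ?thesis
    using opposite_pair_neg_id[OF a b] that
      codiag_kernel_components[OF B q n(1) kernelD(1)[OF n(2) q(1) n(1)] isometryD[OF n(3,1)]]
      codiag_kernel_component_doubled[OF OB q n] madd_in_hom comp_in_hom star_in_hom a b
    by meson
qed

definition mneg :: "'m \<Rightarrow> 'm"
  where "mneg f = (SOME g. g \<in> hom C (dom C f) (cod C f) \<and> f \<oplus> g = zero C (dom C f) (cod C f))"

lemma mneg_in_hom: "f \<in> hom C X Y \<Longrightarrow> mneg f \<in> hom C X Y"
  and madd_mneg_right: "f \<in> hom C X Y \<Longrightarrow> f \<oplus> mneg f = zero C X Y"
proof -
  assume f: "f \<in> hom C X Y"
  note X = in_hom_Ob(1)[OF f] and Y = in_hom_Ob(2)[OF f]
  obtain v where v: "v \<in> hom C Y Y" "idt C Y \<oplus> v = zero C Y Y"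
    using ex_neg_id[OF Y] .
  have "f \<oplus> v \<cdot> f = (idt C Y \<oplus> v) \<cdot> f"
    using madd_comp_right[OF id_in_hom[OF Y] v(1) f] f by (simp add: in_hom_iff)
  then have "v \<cdot> f \<in> hom C X Y \<and> f \<oplus> v \<cdot> f = zero C X Y"
    using v f comp_in_hom X Y by (simp add: in_hom_iff)
  then have "mneg f \<in> hom C X Y \<and> f \<oplus> mneg f = zero C X Y"
    using someI[of "\<lambda>g. g \<in> hom C X Y \<and> f \<oplus> g = zero C X Y"] f
    unfolding mneg_def by (simp add: in_hom_iff)
  then show "mneg f \<in> hom C X Y" "f \<oplus> mneg f = zero C X Y"
    by simp_all
qed

lemma madd_mneg_left: "f \<in> hom C X Y \<Longrightarrow> mneg f \<oplus> f = zero C X Y"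
  using madd_mneg_right madd_commute by metis

lemma mneg_unique:
  assumes f: "f \<in> hom C X Y" and g: "g \<in> hom C X Y" and fg: "f \<oplus> g = zero C X Y"
  shows "g = mneg f"
proof -
  have "g = (mneg f \<oplus> f) \<oplus> g"
    using madd_mneg_left[OF f] madd_zero_left[OF g] by simp
  also have "\<dots> = mneg f"
    using madd_assoc[OF mneg_in_hom[OF f] f g] fg madd_zero_right[OF mneg_in_hom[OF f]] by simp
  finally show ?thesis .
qed

lemma madd_left_cancel:
  assumes a: "a \<in> hom C X Y" and b: "b \<in> hom C X Y" and c: "c \<in> hom C X Y"
    and "a \<oplus> b = a \<oplus> c"
  shows "b = c"
proof -
  have "b = (mneg a \<oplus> a) \<oplus> b" "c = (mneg a \<oplus> a) \<oplus> c"
    using madd_mneg_left[OF a] madd_zero_left b c by simp_all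
  then show ?thesis
    using madd_assoc[OF mneg_in_hom[OF a] a b] madd_assoc[OF mneg_in_hom[OF a] a c] assms(4) by simp
qed

lemma madd_eq_iff_eq_madd_mneg:
  assumes a: "a \<in> hom C X Y" and b: "b \<in> hom C X Y" and c: "c \<in> hom C X Y"
  shows "a \<oplus> b = c \<longleftrightarrow> a = c \<oplus> mneg b"
proof
  assume "a \<oplus> b = c"
  then show "a = c \<oplus> mneg b"
    using madd_assoc[OF a b mneg_in_hom[OF b]] madd_mneg_right[OF b] madd_zero_right[OF a] by simp
next
  assume "a = c \<oplus> mneg b"
  then show "a \<oplus> b = c"
    using madd_assoc[OF c mneg_in_hom[OF b] b] madd_mneg_left[OF b] madd_zero_right[OF c] by simp
qed

lemma comp_mneg_right:
  assumes f: "f \<in> hom C X Y" and k: "k \<in> hom C W X"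
  shows "mneg f \<cdot> k = mneg (f \<cdot> k)"
proof (rule mneg_unique[OF comp_in_hom[OF k f] comp_in_hom[OF k mneg_in_hom[OF f]]])
  show "f \<cdot> k \<oplus> mneg f \<cdot> k = zero C W Y"
    using madd_comp_right[OF f mneg_in_hom[OF f] k] madd_mneg_right[OF f] k in_hom_Ob[OF f]
    by (simp add: in_hom_iff)
qed

lemma comp_mneg_left:
  assumes f: "f \<in> hom C X Y" and h: "h \<in> hom C Y Z"
  shows "h \<cdot> mneg f = mneg (h \<cdot> f)"
proof (rule mneg_unique[OF comp_in_hom[OF f h] comp_in_hom[OF mneg_in_hom[OF f] h]])
  show "h \<cdot> f \<oplus> h \<cdot> mneg f = zero C X Z"
    using madd_comp_left[OF f mneg_in_hom[OF f] h] madd_mneg_right[OF f] h in_hom_Ob[OF f]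
    by (simp add: in_hom_iff)
qed

lemma star_mneg:
  assumes f: "f \<in> hom C X Y"
  shows "(mneg f)\<^sup>\<dagger> = mneg (f\<^sup>\<dagger>)"
proof (rule mneg_unique[OF star_in_hom[OF f] star_in_hom[OF mneg_in_hom[OF f]]])
  show "f\<^sup>\<dagger> \<oplus> (mneg f)\<^sup>\<dagger> = zero C Y X"
    using star_madd[OF f mneg_in_hom[OF f]] madd_mneg_right[OF f] in_hom_Ob[OF f] by simp
qed

lemma mneg_mneg: "f \<in> hom C X Y \<Longrightarrow> mneg (mneg f) = f"
  using mneg_unique[OF mneg_in_hom _ madd_mneg_left] by simp

lemma mneg_zero: "X \<in> Ob C \<Longrightarrow> Y \<in> Ob C \<Longrightarrow> mneg (zero C X Y) = zero C X Y"
  using mneg_unique[OF zero_in_hom zero_in_hom madd_zero_left[OF zero_in_hom]] by metis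

lemma madd_mneg_eq_zero_iff:
  assumes x: "x \<in> hom C X Y" and y: "y \<in> hom C X Y"
  shows "x \<oplus> mneg y = zero C X Y \<longleftrightarrow> x = y"
  using mneg_unique[OF x mneg_in_hom[OF y]] mneg_mneg[OF x] mneg_mneg[OF y] madd_mneg_right[OF y]
  by metis

lemma id_minus_comp:
  assumes E: "E \<in> hom C W W" and x: "x \<in> hom C V W"
  shows "(idt C W \<oplus> mneg E) \<cdot> x = x \<oplus> mneg (E \<cdot> x)"
  using madd_comp_right[OF id_in_hom[OF in_hom_Ob(1)[OF E]] mneg_in_hom[OF E] x]
    comp_mneg_right[OF E x] x by (simp add: in_hom_iff)

lemma comp_id_minus:
  assumes E: "E \<in> hom C W W" and x: "x \<in> hom C W V"
  shows "x \<cdot> (idt C W \<oplus> mneg E) = x \<oplus> mneg (x \<cdot> E)"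
  using madd_comp_left[OF id_in_hom[OF in_hom_Ob(1)[OF E]] mneg_in_hom[OF E] x]
    comp_mneg_left[OF E x] x by (simp add: in_hom_iff)

subsection \<open>Projections\<close>

lemma kernel_projection_unique:
  assumes k: "k \<in> hom C K W" "is_kernel C k g" "isometry C k" and g: "g \<in> hom C W V"
    and E: "E \<in> hom C W W" "E\<^sup>\<dagger> = E" "g \<cdot> E = zero C W V" "E \<cdot> k = k"
  shows "E = k \<cdot> k\<^sup>\<dagger>"
proof -
  obtain h where h: "h \<in> hom C W K" "k \<cdot> h = E"
    using kernel_factor[OF k(2) g k(1) E(1,3)] .
  have "k\<^sup>\<dagger> \<cdot> E = h"
    using h comp_assoc_hom[OF h(1) k(1) star_in_hom[OF k(1)]] isometryD[OF k(3,1)]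
    by (simp add: in_hom_iff)
  then have "E\<^sup>\<dagger> = (k \<cdot> k\<^sup>\<dagger> \<cdot> E)\<^sup>\<dagger>"
    using h by simp
  also have "\<dots> = (k\<^sup>\<dagger> \<cdot> E)\<^sup>\<dagger> \<cdot> k\<^sup>\<dagger>"
    using comp_in_hom[OF E(1) star_in_hom[OF k(1)]] k(1) by (simp add: in_hom_iff)
  also have "(k\<^sup>\<dagger> \<cdot> E)\<^sup>\<dagger> = E\<^sup>\<dagger> \<cdot> k"
    using E(1) k(1) by (simp add: in_hom_iff)
  finally show ?thesis
    using E(2,4) by simp
qed

lemma projection_splits:
  assumes E: "E \<in> hom C W W" "E\<^sup>\<dagger> = E" "E \<cdot> E = E"
  obtains K k where "k \<in> hom C K W" "isometry C k" "E = k \<cdot> k\<^sup>\<dagger>"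
proof -
  note W = in_hom_Ob(1)[OF E(1)]
  define g where "g = idt C W \<oplus> mneg E"
  have g: "g \<in> hom C W W"
    unfolding g_def using madd_in_hom id_in_hom mneg_in_hom E(1) W by blast
  obtain K k where k: "k \<in> hom C K W" "is_kernel C k g" "isometry C k"
    using ex_isometric_kernel[OF g] .
  have "g \<cdot> E = zero C W W"
    unfolding g_def id_minus_comp[OF E(1) E(1)] E(3) using madd_mneg_right[OF E(1)] .
  moreover have "E \<cdot> k = k"
    using kernelD(1)[OF k(2) g k(1)] madd_mneg_eq_zero_iff[OF k(1) comp_in_hom[OF k(1) E(1)]]
    unfolding g_def id_minus_comp[OF E(1) k(1)] by simp
  ultimately show ?thesis
    using that k kernel_projection_unique[OF k g E(1,2)] by blast
qed

lemma isometry_proj_add_kernel_proj: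
  assumes s: "s \<in> hom C Y S" "isometry C s" and k: "k \<in> hom C K S" "is_kernel C k (s\<^sup>\<dagger>)" "isometry C k"
  shows "s \<cdot> s\<^sup>\<dagger> \<oplus> k \<cdot> k\<^sup>\<dagger> = idt C S"
proof -
  note S = in_hom_Ob(2)[OF s(1)] and Y = in_hom_Ob(1)[OF s(1)] and K = in_hom_Ob(1)[OF k(1)]
  have sh: "s\<^sup>\<dagger> \<in> hom C S Y"
    using star_in_hom[OF s(1)] .
  have p: "s \<cdot> s\<^sup>\<dagger> \<in> hom C S S"
    using comp_in_hom[OF sh s(1)] .
  define E where "E = idt C S \<oplus> mneg (s \<cdot> s\<^sup>\<dagger>)"
  have Eh: "E \<in> hom C S S"
    unfolding E_def using madd_in_hom id_in_hom mneg_in_hom p S by blast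
  have "E\<^sup>\<dagger> = E"
    unfolding E_def using star_madd[OF id_in_hom[OF S] mneg_in_hom[OF p]] star_mneg[OF p] s(1) S
    by (simp add: in_hom_iff)
  moreover have "s\<^sup>\<dagger> \<cdot> E = zero C S Y"
  proof -
    have "s\<^sup>\<dagger> \<cdot> s \<cdot> s\<^sup>\<dagger> = s\<^sup>\<dagger>"
      using comp_assoc_hom[OF sh s(1) sh] isometryD[OF s(2,1)] sh by (simp add: in_hom_iff)
    then show ?thesis
      unfolding E_def comp_id_minus[OF p sh] using madd_mneg_right[OF sh] by simp
  qed
  moreover have "E \<cdot> k = k"
  proof -
    have "s \<cdot> s\<^sup>\<dagger> \<cdot> k = zero C K S"
      using kernelD(1)[OF k(2) sh k(1)] s(1) K Y by (simp add: in_hom_iff)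
    then show ?thesis
      unfolding E_def id_minus_comp[OF p k(1)] using comp_assoc_hom[OF k(1) sh s(1)]
        mneg_zero[OF K S] madd_zero_right[OF k(1)] by simp
  qed
  ultimately have "E = k \<cdot> k\<^sup>\<dagger>"
    using kernel_projection_unique[OF k sh Eh] by blast
  moreover have "s \<cdot> s\<^sup>\<dagger> \<oplus> E = idt C S"
    unfolding E_def using madd_left_commute[OF p id_in_hom[OF S] mneg_in_hom[OF p]]
      madd_mneg_right[OF p] madd_zero_right[OF id_in_hom[OF S]] by simp
  ultimately show ?thesis
    by simp
qed

subsection \<open>Invertibility and the strict order\<close>

lemma selfadjoint_left_inverse_invertible:
  assumes D: "D \<in> hom C X X" "D\<^sup>\<dagger> = D" and a: "a \<in> hom C X X" "a \<cdot> D = idt C X"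
  shows "invertible C D"
proof -
  note X = in_hom_Ob(1)[OF D(1)]
  have "D \<cdot> a\<^sup>\<dagger> = (a \<cdot> D)\<^sup>\<dagger>"
    using D a(1) by (simp add: in_hom_iff)
  then have Da: "D \<cdot> a\<^sup>\<dagger> = idt C X"
    using a(2) X by simp
  have "a = (a \<cdot> D) \<cdot> a\<^sup>\<dagger>"
    using comp_assoc_hom[OF star_in_hom[OF a(1)] D(1) a(1)] Da a(1) by (simp add: in_hom_iff)
  then have "a = a\<^sup>\<dagger>"
    using a star_in_hom[OF a(1)] by (simp add: in_hom_iff)
  then show ?thesis
    using invertibleI[OF D(1) a] Da by simp
qed

lemma invertible_gram:
  assumes z: "z \<in> hom C P S" "invertible C z"
  shows "invertible C (z\<^sup>\<dagger> \<cdot> z)"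
proof -
  obtain zi where zi: "zi \<in> hom C S P" "zi \<cdot> z = idt C P" "z \<cdot> zi = idt C S"
    using invertibleE[OF z(2,1)] .
  have zz: "z\<^sup>\<dagger> \<cdot> z \<in> hom C P P"
    using comp_in_hom star_in_hom z(1) by blast
  have "(zi \<cdot> zi\<^sup>\<dagger>) \<cdot> z\<^sup>\<dagger> \<cdot> z = zi \<cdot> (z \<cdot> zi)\<^sup>\<dagger> \<cdot> z"
    using z(1) zi(1) by (simp add: in_hom_iff comp_assoc)
  also have "\<dots> = idt C P"
    using zi z(1) in_hom_Ob[OF zi(1)] by (simp add: in_hom_iff)
  finally show ?thesis
    using selfadjoint_left_inverse_invertible[OF zz _ comp_in_hom[OF star_in_hom[OF zi(1)] zi(1)]]
      z(1) by (simp add: in_hom_iff)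
qed

lemma coproduct_comparison_invertible:
  assumes P: "is_coproduct C A B P s1 s2" and S: "is_coproduct C A B S u1 u2"
    and z: "z \<in> hom C P S" "z \<cdot> s1 = u1" "z \<cdot> s2 = u2"
  shows "invertible C z"
proof -
  have s: "s1 \<in> hom C A P" "s2 \<in> hom C B P" "P \<in> Ob C"
    and u: "u1 \<in> hom C A S" "u2 \<in> hom C B S" "S \<in> Ob C"
    using coproductD[OF P] coproductD[OF S] by auto
  obtain zi where zi: "zi \<in> hom C S P" "zi \<cdot> u1 = s1" "zi \<cdot> u2 = s2"
    using coproduct_copair[OF S s(1,2)] .
  have "zi \<cdot> z = idt C P"
    using coproduct_eqI[OF P comp_in_hom[OF z(1) zi(1)] id_in_hom[OF s(3)]]
      comp_assoc_hom[OF s(1) z(1) zi(1)] comp_assoc_hom[OF s(2) z(1) zi(1)] z zi s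
    by (simp add: in_hom_iff)
  moreover have "z \<cdot> zi = idt C S"
    using coproduct_eqI[OF S comp_in_hom[OF zi(1) z(1)] id_in_hom[OF u(3)]]
      comp_assoc_hom[OF u(1) zi(1) z(1)] comp_assoc_hom[OF u(2) zi(1) z(1)] z zi u
    by (simp add: in_hom_iff)
  ultimately show ?thesis
    using invertibleI[OF z(1) zi(1)] by blast
qed

lemma herm_lt_iff:
  assumes a: "a \<in> hom C X X" "a\<^sup>\<dagger> = a"
  shows "herm_lt C a b \<longleftrightarrow> (\<exists>W y. y \<in> hom C X W \<and> b = a \<oplus> y\<^sup>\<dagger> \<cdot> y \<and> invertible C (y\<^sup>\<dagger> \<cdot> y))"
proof
  assume "herm_lt C a b"
  then show "\<exists>W y. y \<in> hom C X W \<and> b = a \<oplus> y\<^sup>\<dagger> \<cdot> y \<and> invertible C (y\<^sup>\<dagger> \<cdot> y)"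
    using a unfolding herm_lt_def is_sum_iff in_hom_iff by auto
next
  assume "\<exists>W y. y \<in> hom C X W \<and> b = a \<oplus> y\<^sup>\<dagger> \<cdot> y \<and> invertible C (y\<^sup>\<dagger> \<cdot> y)"
  then obtain W y where y: "y \<in> hom C X W" and b: "b = a \<oplus> y\<^sup>\<dagger> \<cdot> y"
    and inv: "invertible C (y\<^sup>\<dagger> \<cdot> y)"
    by blast
  have yy: "y\<^sup>\<dagger> \<cdot> y \<in> hom C X X"
    using comp_in_hom star_in_hom y by blast
  have "b \<in> hom C X X" "b\<^sup>\<dagger> = b"
    using b madd_in_hom[OF a(1) yy] star_madd[OF a(1) yy] a(2) y by (simp_all add: in_hom_iff)
  then show "herm_lt C a b"
    using a y yy b inv is_sum_madd[OF a(1) yy] unfolding herm_lt_def hermitian_def in_hom_iff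
    by auto
qed

lemma strictly_contractive_iff:
  assumes f: "f \<in> hom C X Y"
  shows "strictly_contractive C f \<longleftrightarrow>
    (\<exists>W y. y \<in> hom C X W \<and> f\<^sup>\<dagger> \<cdot> f \<oplus> y\<^sup>\<dagger> \<cdot> y = idt C X \<and> invertible C (y\<^sup>\<dagger> \<cdot> y))"
proof -
  have ff: "f\<^sup>\<dagger> \<cdot> f \<in> hom C X X" "(f\<^sup>\<dagger> \<cdot> f)\<^sup>\<dagger> = f\<^sup>\<dagger> \<cdot> f" and "dom C f = X"
    using comp_in_hom[OF f star_in_hom[OF f]] f by (simp_all add: in_hom_iff)
  then show ?thesis
    unfolding strictly_contractive_def herm_lt_iff[OF ff] by metis
qed

lemma herm_lt_zero_iff:
  assumes m: "m \<in> hom C P P"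
  shows "herm_lt C (zero C P P) m \<longleftrightarrow> (\<exists>W z. z \<in> hom C P W \<and> m = z\<^sup>\<dagger> \<cdot> z \<and> invertible C (z\<^sup>\<dagger> \<cdot> z))"
proof -
  note P = in_hom_Ob(1)[OF m]
  have "zero C P P \<oplus> z\<^sup>\<dagger> \<cdot> z = z\<^sup>\<dagger> \<cdot> z" if "z \<in> hom C P W" for z W
    using madd_zero_left comp_in_hom star_in_hom that by blast
  then show ?thesis
    unfolding herm_lt_iff[OF zero_in_hom[OF P P] star_zero[OF P P]] by metis
qed

subsection \<open>Codilations\<close>

lemma codilationD:
  assumes "codilation C f S s1 s2" "f \<in> hom C X Y"
  shows "s1 \<in> hom C X S" "s2 \<in> hom C Y S" "s1\<^sup>\<dagger> \<cdot> s1 = idt C X" "s2\<^sup>\<dagger> \<cdot> s2 = idt C Y"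
    "s2\<^sup>\<dagger> \<cdot> s1 = f" "s1\<^sup>\<dagger> \<cdot> s2 = f\<^sup>\<dagger>"
proof -
  have dom: "dom C f = X" "cod C f = Y"
    using assms(2) by (simp_all add: in_hom_iff)
  show s: "s1 \<in> hom C X S" "s2 \<in> hom C Y S"
    using assms(1) unfolding codilation_def dom by auto
  show "s1\<^sup>\<dagger> \<cdot> s1 = idt C X" "s2\<^sup>\<dagger> \<cdot> s2 = idt C Y"
    using assms(1) isometryD s unfolding codilation_def by blast+
  show "s2\<^sup>\<dagger> \<cdot> s1 = f"
    using assms(1) unfolding codilation_def by blast
  then show "s1\<^sup>\<dagger> \<cdot> s2 = f\<^sup>\<dagger>"
    using s by (auto simp: in_hom_iff)
qed

lemma codilationI:
  assumes "f \<in> hom C X Y" "s1 \<in> hom C X S" "s2 \<in> hom C Y S"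
    "s1\<^sup>\<dagger> \<cdot> s1 = idt C X" "s2\<^sup>\<dagger> \<cdot> s2 = idt C Y" "s2\<^sup>\<dagger> \<cdot> s1 = f"
  shows "codilation C f S s1 s2"
  using assms unfolding codilation_def isometry_def in_hom_iff by auto

lemma codilation_defect:
  assumes f: "f \<in> hom C X Y" and cd: "codilation C f S s1 s2"
    and k: "k \<in> hom C K S" "is_kernel C k (s2\<^sup>\<dagger>)" "isometry C k"
  shows "f\<^sup>\<dagger> \<cdot> f \<oplus> (k\<^sup>\<dagger> \<cdot> s1)\<^sup>\<dagger> \<cdot> (k\<^sup>\<dagger> \<cdot> s1) = idt C X"
proof -
  note s = codilationD[OF cd f]
  have s2: "isometry C s2"
    using cd unfolding codilation_def by blast
  have p: "s2 \<cdot> s2\<^sup>\<dagger> \<in> hom C S S" and q: "k \<cdot> k\<^sup>\<dagger> \<in> hom C S S"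
    using comp_in_hom star_in_hom s(2) k(1) by blast+
  have "idt C X = s1\<^sup>\<dagger> \<cdot> (s2 \<cdot> s2\<^sup>\<dagger>) \<cdot> s1 \<oplus> s1\<^sup>\<dagger> \<cdot> (k \<cdot> k\<^sup>\<dagger>) \<cdot> s1"
    using comp_split[OF p q isometry_proj_add_kernel_proj[OF s(2) s2 k] star_in_hom[OF s(1)] s(1)]
      s(3) by simp
  also have "\<dots> = f\<^sup>\<dagger> \<cdot> f \<oplus> (k\<^sup>\<dagger> \<cdot> s1)\<^sup>\<dagger> \<cdot> (k\<^sup>\<dagger> \<cdot> s1)"
    using s k(1) comp_assoc_subst[OF f s(2) star_in_hom[OF s(1)] s(6)]
    by (simp add: in_hom_iff comp_assoc)
  finally show ?thesis
    by simp
qed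

lemma coproduct_codilation_defect_invertible:
  assumes f: "f \<in> hom C X Y" and cd: "codilation C f S s1 s2" and cop: "is_coproduct C X Y S s1 s2"
    and k: "k \<in> hom C K S" "is_kernel C k (s2\<^sup>\<dagger>)" "isometry C k"
  shows "invertible C (k\<^sup>\<dagger> \<cdot> s1)"
proof -
  note s = codilationD[OF cd f]
  note X = in_hom_Ob(1)[OF f] and Y = in_hom_Ob(2)[OF f] and K = in_hom_Ob(1)[OF k(1)]
  have s2: "isometry C s2"
    using cd unfolding codilation_def by blast
  obtain h where h: "h \<in> hom C S X" "h \<cdot> s1 = idt C X" "h \<cdot> s2 = zero C Y X"
    using coproduct_copair[OF cop id_in_hom[OF X] zero_in_hom[OF Y X]] .
  obtain g where g: "g \<in> hom C S Y" "g \<cdot> s1 = zero C X Y" "g \<cdot> s2 = idt C Y"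
    using coproduct_copair[OF cop zero_in_hom[OF X Y] id_in_hom[OF Y]] .
  have sh: "s1 \<cdot> h \<in> hom C S S" and sg: "s2 \<cdot> g \<in> hom C S S"
    and ss: "s2 \<cdot> s2\<^sup>\<dagger> \<in> hom C S S" and kk: "k \<cdot> k\<^sup>\<dagger> \<in> hom C S S"
    using comp_in_hom star_in_hom h g s k(1) by blast+
  note ID = coproduct_id_eq_madd[OF cop h g]
  have "(s2\<^sup>\<dagger> \<cdot> k)\<^sup>\<dagger> = k\<^sup>\<dagger> \<cdot> s2"
    using k(1) s(2) by (simp add: in_hom_iff)
  then have ks2: "k\<^sup>\<dagger> \<cdot> s2 = zero C Y K"
    using kernelD(1)[OF k(2) star_in_hom[OF s(2)] k(1)] Y K by simp
  have "idt C K = k\<^sup>\<dagger> \<cdot> (s1 \<cdot> h) \<cdot> k \<oplus> k\<^sup>\<dagger> \<cdot> (s2 \<cdot> g) \<cdot> k"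
    using comp_split[OF sh sg ID star_in_hom[OF k(1)] k(1)] isometryD[OF k(3,1)] by simp
  also have "k\<^sup>\<dagger> \<cdot> (s2 \<cdot> g) \<cdot> k = zero C K K"
    using ks2 s(2) g(1) k(1) K Y by (simp add: in_hom_iff flip: comp_assoc)
  also have "k\<^sup>\<dagger> \<cdot> (s1 \<cdot> h) \<cdot> k = (k\<^sup>\<dagger> \<cdot> s1) \<cdot> (h \<cdot> k)"
    using s(1) h(1) k(1) by (simp add: in_hom_iff comp_assoc)
  finally have inv1: "(k\<^sup>\<dagger> \<cdot> s1) \<cdot> (h \<cdot> k) = idt C K"
    using madd_zero_right comp_in_hom[OF comp_in_hom[OF k(1) h(1)] comp_in_hom[OF s(1) star_in_hom[OF k(1)]]]
    by metis
  have "idt C X = h \<cdot> (s2 \<cdot> s2\<^sup>\<dagger>) \<cdot> s1 \<oplus> h \<cdot> (k \<cdot> k\<^sup>\<dagger>) \<cdot> s1"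
    using comp_split[OF ss kk isometry_proj_add_kernel_proj[OF s(2) s2 k] h(1) s(1)] h(2) by simp
  also have "h \<cdot> (s2 \<cdot> s2\<^sup>\<dagger>) \<cdot> s1 = zero C X X"
    using h(3) s(1,2) h(1) X Y by (simp add: in_hom_iff flip: comp_assoc)
  also have "h \<cdot> (k \<cdot> k\<^sup>\<dagger>) \<cdot> s1 = (h \<cdot> k) \<cdot> (k\<^sup>\<dagger> \<cdot> s1)"
    using s(1) h(1) k(1) by (simp add: in_hom_iff comp_assoc)
  finally have inv2: "(h \<cdot> k) \<cdot> (k\<^sup>\<dagger> \<cdot> s1) = idt C X"
    using madd_zero_left comp_in_hom[OF comp_in_hom[OF s(1) star_in_hom[OF k(1)]] comp_in_hom[OF k(1) h(1)]]
    by metis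
  show ?thesis
    using invertibleI[OF comp_in_hom[OF s(1) star_in_hom[OF k(1)]] comp_in_hom[OF k(1) h(1)] inv2 inv1] .
qed

lemma gram_inverse_projection:
  assumes y: "y \<in> hom C X W" and e: "e \<in> hom C X X" "e \<cdot> y\<^sup>\<dagger> \<cdot> y = idt C X" "(y\<^sup>\<dagger> \<cdot> y) \<cdot> e = idt C X"
  defines "E \<equiv> y \<cdot> e \<cdot> y\<^sup>\<dagger>"
  shows "E \<in> hom C W W" "E\<^sup>\<dagger> = E" "E \<cdot> E = E" "E \<cdot> y = y"
proof -
  note X = in_hom_Ob(1)[OF y]
  show Eh: "E \<in> hom C W W"
    unfolding E_def using comp_in_hom star_in_hom y e(1) by blast
  show Ey: "E \<cdot> y = y"
    unfolding E_def using e y by (simp add: in_hom_iff comp_assoc)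
  have "e\<^sup>\<dagger> = e\<^sup>\<dagger> \<cdot> (y\<^sup>\<dagger> \<cdot> y) \<cdot> e"
    using e(1,3) by (simp add: in_hom_iff)
  also have "\<dots> = ((y\<^sup>\<dagger> \<cdot> y) \<cdot> e)\<^sup>\<dagger> \<cdot> e"
    using e(1) y by (simp add: in_hom_iff comp_assoc)
  finally have "e\<^sup>\<dagger> = e"
    using e(1,3) X by (simp add: in_hom_iff)
  then show "E\<^sup>\<dagger> = E"
    using e(1) y unfolding E_def by (simp add: in_hom_iff comp_assoc)
  have "E \<cdot> E = E \<cdot> y \<cdot> e \<cdot> y\<^sup>\<dagger>"
    by (simp only: E_def[symmetric])
  also have "\<dots> = (E \<cdot> y) \<cdot> e \<cdot> y\<^sup>\<dagger>"
    using comp_assoc_hom[OF comp_in_hom[OF star_in_hom[OF y] e(1)] y Eh] .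
  finally show "E \<cdot> E = E"
    using Ey by (simp add: E_def)
qed

(* The corestriction of y to the range of the projection y (y* y)^-1 y*. *)
lemma ex_invertible_with_same_gram:
  assumes y: "y \<in> hom C X W" "invertible C (y\<^sup>\<dagger> \<cdot> y)"
  obtains K y' where "y' \<in> hom C X K" "invertible C y'" "y'\<^sup>\<dagger> \<cdot> y' = y\<^sup>\<dagger> \<cdot> y"
proof -
  have "y\<^sup>\<dagger> \<cdot> y \<in> hom C X X"
    using comp_in_hom star_in_hom y(1) by blast
  then obtain e where e: "e \<in> hom C X X" "e \<cdot> y\<^sup>\<dagger> \<cdot> y = idt C X" "(y\<^sup>\<dagger> \<cdot> y) \<cdot> e = idt C X"
    using invertibleE[OF y(2)] by blast
  note E = gram_inverse_projection[OF y(1) e]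
  obtain K k where k: "k \<in> hom C K W" "isometry C k" "y \<cdot> e \<cdot> y\<^sup>\<dagger> = k \<cdot> k\<^sup>\<dagger>"
    using projection_splits[OF E(1-3)] by blast
  have kky: "k \<cdot> k\<^sup>\<dagger> \<cdot> y = y"
    using E(4) k(1,3) y(1) by (simp add: in_hom_iff comp_assoc)
  have kEk: "y \<cdot> e \<cdot> y\<^sup>\<dagger> \<cdot> k = k"
    using comp_assoc_subst[OF k(1) star_in_hom[OF k(1)] k(1) k(3)[symmetric]] isometryD[OF k(2,1)]
      k(1) y(1) e(1) by (simp add: in_hom_iff comp_assoc)
  have y': "k\<^sup>\<dagger> \<cdot> y \<in> hom C X K" and yi: "e \<cdot> y\<^sup>\<dagger> \<cdot> k \<in> hom C K X"
    using comp_in_hom star_in_hom y(1) e(1) k(1) by blast+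
  have "(e \<cdot> y\<^sup>\<dagger> \<cdot> k) \<cdot> (k\<^sup>\<dagger> \<cdot> y) = idt C X"
    using kky e y(1) k(1) by (simp add: in_hom_iff comp_assoc)
  moreover have "(k\<^sup>\<dagger> \<cdot> y) \<cdot> (e \<cdot> y\<^sup>\<dagger> \<cdot> k) = idt C K"
    using kEk isometryD[OF k(2,1)] e y(1) k(1) by (simp add: in_hom_iff comp_assoc)
  moreover have "(k\<^sup>\<dagger> \<cdot> y)\<^sup>\<dagger> \<cdot> (k\<^sup>\<dagger> \<cdot> y) = y\<^sup>\<dagger> \<cdot> y"
    using kky y(1) k(1) by (simp add: in_hom_iff comp_assoc)
  ultimately show ?thesis
    using that y' invertibleI[OF y' yi] by blast
qed

lemma graph_copair_unique:
  assumes B: "is_biproduct C Y K S t1 r1 t2 r2" and f: "f \<in> hom C X Y"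
    and y: "y \<in> hom C X K" "invertible C y" and h: "h \<in> hom C S Z" "h' \<in> hom C S Z"
    and "h \<cdot> (t1 \<cdot> f \<oplus> t2 \<cdot> y) = h' \<cdot> (t1 \<cdot> f \<oplus> t2 \<cdot> y)" "h \<cdot> t1 = h' \<cdot> t1"
  shows "h = h'"
proof -
  note b = biproductD[OF B]
  obtain yi where yi: "yi \<in> hom C K X" "yi \<cdot> y = idt C X" "y \<cdot> yi = idt C K"
    using invertibleE[OF y(2,1)] .
  have ht: "h \<cdot> t2 \<in> hom C K Z" "h' \<cdot> t2 \<in> hom C K Z"
    using comp_in_hom b(3) h by blast+
  have "(h \<cdot> t1) \<cdot> f \<oplus> (h \<cdot> t2) \<cdot> y = (h \<cdot> t1) \<cdot> f \<oplus> (h' \<cdot> t2) \<cdot> y"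
    using comp_madd_comp[OF f y(1) b(2,3) h(1)] comp_madd_comp[OF f y(1) b(2,3) h(2)] assms(7,8) by simp
  then have "(h \<cdot> t2) \<cdot> y = (h' \<cdot> t2) \<cdot> y"
    using madd_left_cancel comp_in_hom[OF f comp_in_hom[OF b(2) h(1)]]
      comp_in_hom[OF y(1) ht(1)] comp_in_hom[OF y(1) ht(2)] by blast
  then have "h \<cdot> t2 = h' \<cdot> t2"
    using comp_assoc_hom[OF yi(1) y(1) ht(1)] comp_assoc_hom[OF yi(1) y(1) ht(2)] yi(3) ht
    by (simp add: in_hom_iff)
  then show ?thesis
    using coproduct_eqI[OF biproduct_is_coproduct[OF B] h] assms(8) by simp
qed

lemma graph_is_coproduct:
  assumes B: "is_biproduct C Y K S t1 r1 t2 r2" and f: "f \<in> hom C X Y"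
    and y: "y \<in> hom C X K" "invertible C y"
  shows "is_coproduct C X Y S (t1 \<cdot> f \<oplus> t2 \<cdot> y) t1"
proof -
  note b = biproductD[OF B]
  obtain yi where yi: "yi \<in> hom C K X" "yi \<cdot> y = idt C X" "y \<cdot> yi = idt C K"
    using invertibleE[OF y(2,1)] .
  define s where "s = t1 \<cdot> f \<oplus> t2 \<cdot> y"
  have s: "s \<in> hom C X S"
    unfolding s_def using madd_in_hom comp_in_hom f y(1) b(2,3) by blast
  have "\<exists>h. h \<in> hom C S Z \<and> h \<cdot> s = g1 \<and> h \<cdot> t1 = g2"
    if g1: "g1 \<in> hom C X Z" and g2: "g2 \<in> hom C Y Z" for Z g1 g2
  proof -
    have gf: "g2 \<cdot> f \<in> hom C X Z"
      using comp_in_hom[OF f g2] .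
    have g1': "g1 \<oplus> mneg (g2 \<cdot> f) \<in> hom C X Z"
      using madd_in_hom[OF g1 mneg_in_hom[OF gf]] .
    obtain h where h: "h \<in> hom C S Z" "h \<cdot> t1 = g2" "h \<cdot> t2 = (g1 \<oplus> mneg (g2 \<cdot> f)) \<cdot> yi"
      using coproduct_copair[OF biproduct_is_coproduct[OF B] g2 comp_in_hom[OF yi(1) g1']] .
    have "((g1 \<oplus> mneg (g2 \<cdot> f)) \<cdot> yi) \<cdot> y = g1 \<oplus> mneg (g2 \<cdot> f)"
      using comp_assoc_hom[OF y(1) yi(1) g1'] yi(1,2) g1' by (simp add: in_hom_iff)
    then have "h \<cdot> s = g2 \<cdot> f \<oplus> (g1 \<oplus> mneg (g2 \<cdot> f))"
      unfolding s_def comp_madd_comp[OF f y(1) b(2,3) h(1)] h(2,3) by simp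
    also have "\<dots> = g1"
      using madd_left_commute[OF gf g1 mneg_in_hom[OF gf]] madd_mneg_right[OF gf]
        madd_zero_right[OF g1] by simp
    finally show ?thesis
      using h(1,2) by blast
  qed
  moreover have "h = h'" if "h \<in> hom C S Z" "h' \<in> hom C S Z" "h \<cdot> s = h' \<cdot> s" "h \<cdot> t1 = h' \<cdot> t1"
    for h h' Z
    using graph_copair_unique[OF B f y that(1,2)] that(3,4) unfolding s_def by blast
  ultimately show ?thesis
    unfolding s_def[symmetric] is_coproduct_def using b(1,2) s by metis
qed

lemma strictly_contractive_imp_coproduct_codilation:
  assumes f: "f \<in> hom C X Y" and sc: "strictly_contractive C f"
  obtains S s1 s2 where "codilation C f S s1 s2" "is_coproduct C X Y S s1 s2"
proof -
  obtain W y where y: "y \<in> hom C X W" "f\<^sup>\<dagger> \<cdot> f \<oplus> y\<^sup>\<dagger> \<cdot> y = idt C X" "invertible C (y\<^sup>\<dagger> \<cdot> y)"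
    using sc strictly_contractive_iff[OF f] by blast
  obtain K y' where y': "y' \<in> hom C X K" "invertible C y'" "y'\<^sup>\<dagger> \<cdot> y' = y\<^sup>\<dagger> \<cdot> y"
    using ex_invertible_with_same_gram[OF y(1,3)] .
  note X = in_hom_Ob(1)[OF f] and Y = in_hom_Ob(2)[OF f] and K = in_hom_Ob(2)[OF y'(1)]
  obtain S t1 t2 where B: "is_biproduct C Y K S t1 (t1\<^sup>\<dagger>) t2 (t2\<^sup>\<dagger>)"
    using ex_biproduct[OF Y K] .
  note b = biproductD[OF B]
  define s where "s = t1 \<cdot> f \<oplus> t2 \<cdot> y'"
  have tf: "t1 \<cdot> f \<in> hom C X S" and ty: "t2 \<cdot> y' \<in> hom C X S"
    using comp_in_hom f y'(1) b(2,3) by blast+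
  have s: "s \<in> hom C X S"
    unfolding s_def using madd_in_hom[OF tf ty] .
  have t1s: "t1\<^sup>\<dagger> \<cdot> s = f"
    unfolding s_def madd_comp_left[OF tf ty b(4)]
    using comp_assoc_hom[OF f b(2) b(4)] comp_assoc_hom[OF y'(1) b(3) b(4)] b f y'(1) X
      madd_zero_right[OF f] by (simp add: in_hom_iff)
  have t2s: "t2\<^sup>\<dagger> \<cdot> s = y'"
    unfolding s_def madd_comp_left[OF tf ty b(5)]
    using comp_assoc_hom[OF f b(2) b(5)] comp_assoc_hom[OF y'(1) b(3) b(5)] b f y'(1) X
      madd_zero_left[OF y'(1)] by (simp add: in_hom_iff)
  have "s\<^sup>\<dagger> \<cdot> t1 = f\<^sup>\<dagger>" "s\<^sup>\<dagger> \<cdot> t2 = y'\<^sup>\<dagger>"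
    using arg_cong[OF t1s, of cstar] arg_cong[OF t2s, of cstar] s b by (simp_all add: in_hom_iff)
  then have "s\<^sup>\<dagger> \<cdot> s = idt C X"
    using biproduct_comp_expand[OF B star_in_hom[OF s] s] t1s t2s y'(3) y(2) by simp
  then have "codilation C f S s t1"
    using codilationI[OF f s b(2) _ b(6) t1s] by blast
  moreover have "is_coproduct C X Y S s t1"
    unfolding s_def using graph_is_coproduct[OF B f y'(1,2)] .
  ultimately show ?thesis
    using that by blast
qed

lemma coproduct_codilation_imp_strictly_contractive:
  assumes f: "f \<in> hom C X Y" and cd: "codilation C f S s1 s2" and cop: "is_coproduct C X Y S s1 s2"
  shows "strictly_contractive C f"
proof -
  note s = codilationD[OF cd f]
  obtain K k where k: "k \<in> hom C K S" "is_kernel C k (s2\<^sup>\<dagger>)" "isometry C k"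
    using ex_isometric_kernel[OF star_in_hom[OF s(2)]] .
  have y: "k\<^sup>\<dagger> \<cdot> s1 \<in> hom C X K"
    using comp_in_hom[OF s(1) star_in_hom[OF k(1)]] .
  then have "invertible C ((k\<^sup>\<dagger> \<cdot> s1)\<^sup>\<dagger> \<cdot> (k\<^sup>\<dagger> \<cdot> s1))"
    using invertible_gram coproduct_codilation_defect_invertible[OF f cd cop k] by blast
  then show ?thesis
    using strictly_contractive_iff[OF f] codilation_defect[OF f cd k] y by blast
qed

lemma codilation_iff_gram:
  assumes B: "is_biproduct C X Y P s1 (s1\<^sup>\<dagger>) s2 (s2\<^sup>\<dagger>)" and f: "f \<in> hom C X Y" and m: "m \<in> hom C P P"
    and m11: "s1\<^sup>\<dagger> \<cdot> m \<cdot> s1 = idt C X" and m12: "s1\<^sup>\<dagger> \<cdot> m \<cdot> s2 = f\<^sup>\<dagger>"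
    and m21: "s2\<^sup>\<dagger> \<cdot> m \<cdot> s1 = f" and m22: "s2\<^sup>\<dagger> \<cdot> m \<cdot> s2 = idt C Y"
    and z: "z \<in> hom C P W"
  shows "codilation C f W (z \<cdot> s1) (z \<cdot> s2) \<longleftrightarrow> m = z\<^sup>\<dagger> \<cdot> z"
proof -
  note b = biproductD[OF B]
  have gram: "si\<^sup>\<dagger> \<cdot> (z\<^sup>\<dagger> \<cdot> z) \<cdot> sj = (z \<cdot> si)\<^sup>\<dagger> \<cdot> (z \<cdot> sj)"
    if "si \<in> hom C A P" "sj \<in> hom C B P" for si sj A B
    using that z by (simp add: in_hom_iff comp_assoc)
  show ?thesis
  proof
    assume cd: "codilation C f W (z \<cdot> s1) (z \<cdot> s2)"
    note c = codilationD[OF cd f]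
    show "m = z\<^sup>\<dagger> \<cdot> z"
      by (rule biproduct_endo_eqI[OF B m comp_in_hom[OF z star_in_hom[OF z]]])
        (simp_all only: gram[OF b(2) b(2)] gram[OF b(2) b(3)] gram[OF b(3) b(2)] gram[OF b(3) b(3)]
          c m11 m12 m21 m22)
  next
    assume "m = z\<^sup>\<dagger> \<cdot> z"
    then show "codilation C f W (z \<cdot> s1) (z \<cdot> s2)"
      using codilationI[OF f comp_in_hom[OF b(2) z] comp_in_hom[OF b(3) z]]
        gram[OF b(2) b(2)] gram[OF b(3) b(3)] gram[OF b(3) b(2)] m11 m22 m21 by simp
  qed
qed

lemma ex_block_matrix:
  assumes B: "is_biproduct C X Y P s1 r1 s2 r2" and f: "f \<in> hom C X Y"
  obtains m where "m \<in> hom C P P" "r1 \<cdot> m \<cdot> s1 = idt C X" "r1 \<cdot> m \<cdot> s2 = f\<^sup>\<dagger>"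
    "r2 \<cdot> m \<cdot> s1 = f" "r2 \<cdot> m \<cdot> s2 = idt C Y"
proof -
  note Pr = biproduct_is_product[OF B] and b = biproductD[OF B]
  obtain c1 where c1: "c1 \<in> hom C X P" "r1 \<cdot> c1 = idt C X" "r2 \<cdot> c1 = f"
    using product_pair[OF Pr id_in_hom[OF b(10)] f] .
  obtain c2 where c2: "c2 \<in> hom C Y P" "r1 \<cdot> c2 = f\<^sup>\<dagger>" "r2 \<cdot> c2 = idt C Y"
    using product_pair[OF Pr star_in_hom[OF f] id_in_hom[OF b(11)]] .
  obtain m where "m \<in> hom C P P" "m \<cdot> s1 = c1" "m \<cdot> s2 = c2"
    using coproduct_copair[OF biproduct_is_coproduct[OF B] c1(1) c2(1)] .
  then show ?thesis
    using that c1 c2 by simp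
qed

lemma block_matrix_comp_graph:
  assumes B: "is_biproduct C X Y P s1 r1 s2 r2" and f: "f \<in> hom C X Y" and m: "m \<in> hom C P P"
    and m11: "r1 \<cdot> m \<cdot> s1 = idt C X" and m12: "r1 \<cdot> m \<cdot> s2 = f\<^sup>\<dagger>"
    and m21: "r2 \<cdot> m \<cdot> s1 = f" and m22: "r2 \<cdot> m \<cdot> s2 = idt C Y"
  shows "m \<cdot> (s1 \<oplus> s2 \<cdot> mneg f) = s1 \<cdot> (idt C X \<oplus> mneg (f\<^sup>\<dagger> \<cdot> f))"
proof -
  note b = biproductD[OF B]
  note X = b(10) and Y = b(11)
  have D: "idt C X \<oplus> mneg (f\<^sup>\<dagger> \<cdot> f) \<in> hom C X X"
    using madd_in_hom id_in_hom mneg_in_hom comp_in_hom star_in_hom f X by meson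
  have s2f: "s2 \<cdot> mneg f \<in> hom C X P"
    using comp_in_hom mneg_in_hom f b(3) by blast
  have row: "r \<cdot> m \<cdot> (s1 \<oplus> s2 \<cdot> mneg f) = r \<cdot> m \<cdot> s1 \<oplus> (r \<cdot> m \<cdot> s2) \<cdot> mneg f"
    if r: "r \<in> hom C P Z" for r Z
    unfolding madd_comp_left[OF b(2) s2f m]
      madd_comp_left[OF comp_in_hom[OF b(2) m] comp_in_hom[OF s2f m] r]
    using r m b(3) mneg_in_hom[OF f] by (simp add: in_hom_iff comp_assoc)
  show ?thesis
  proof (rule product_eqI[OF biproduct_is_product[OF B] comp_in_hom[OF madd_in_hom[OF b(2) s2f] m]
        comp_in_hom[OF D b(2)]])
    show "r1 \<cdot> m \<cdot> (s1 \<oplus> s2 \<cdot> mneg f) = r1 \<cdot> s1 \<cdot> (idt C X \<oplus> mneg (f\<^sup>\<dagger> \<cdot> f))"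
      using row[OF b(4)] m11 m12 comp_mneg_left[OF f star_in_hom[OF f]]
        comp_assoc_hom[OF D b(2) b(4)] b(6) D by (simp add: in_hom_iff)
    show "r2 \<cdot> m \<cdot> (s1 \<oplus> s2 \<cdot> mneg f) = r2 \<cdot> s1 \<cdot> (idt C X \<oplus> mneg (f\<^sup>\<dagger> \<cdot> f))"
      using row[OF b(5)] m21 m22 madd_mneg_right[OF f] comp_assoc_hom[OF D b(2) b(5)] b(8) D
        mneg_in_hom[OF f] Y by (simp add: in_hom_iff)
  qed
qed

lemma schur_complement_invertible:
  assumes B: "is_biproduct C X Y P s1 r1 s2 r2" and f: "f \<in> hom C X Y"
    and m: "m \<in> hom C P P" "invertible C m"
    and entries: "r1 \<cdot> m \<cdot> s1 = idt C X" "r1 \<cdot> m \<cdot> s2 = f\<^sup>\<dagger>" "r2 \<cdot> m \<cdot> s1 = f" "r2 \<cdot> m \<cdot> s2 = idt C Y"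
  shows "invertible C (idt C X \<oplus> mneg (f\<^sup>\<dagger> \<cdot> f))"
proof -
  note b = biproductD[OF B]
  note X = b(10)
  have ff: "f\<^sup>\<dagger> \<cdot> f \<in> hom C X X"
    using comp_in_hom star_in_hom f by blast
  define D where "D = idt C X \<oplus> mneg (f\<^sup>\<dagger> \<cdot> f)"
  have D: "D \<in> hom C X X"
    unfolding D_def using madd_in_hom id_in_hom mneg_in_hom ff X by blast
  have Dst: "D\<^sup>\<dagger> = D"
    unfolding D_def using star_madd[OF id_in_hom[OF X] mneg_in_hom[OF ff]] star_mneg[OF ff] f X
    by (simp add: in_hom_iff)
  define v where "v = s1 \<oplus> s2 \<cdot> mneg f"
  have v: "v \<in> hom C X P"
    unfolding v_def using madd_in_hom comp_in_hom mneg_in_hom f b(2,3) by meson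
  obtain mi where mi: "mi \<in> hom C P P" "mi \<cdot> m = idt C P" "m \<cdot> mi = idt C P"
    using invertibleE[OF m(2,1)] .
  have "r1 \<cdot> v = idt C X"
    unfolding v_def madd_comp_left[OF b(2) comp_in_hom[OF mneg_in_hom[OF f] b(3)] b(4)]
    using comp_assoc_hom[OF mneg_in_hom[OF f] b(3) b(4)] b(6,9) madd_zero_right[OF id_in_hom[OF X]]
      mneg_in_hom[OF f] X by (simp add: in_hom_iff)
  moreover have "v = mi \<cdot> s1 \<cdot> D"
    using comp_assoc_hom[OF v m(1) mi(1)] block_matrix_comp_graph[OF B f m(1) entries] mi(2) v
    unfolding v_def D_def by (simp add: in_hom_iff)
  ultimately have "(r1 \<cdot> mi \<cdot> s1) \<cdot> D = idt C X"
    using b(2,4) mi(1) D by (simp add: in_hom_iff comp_assoc)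
  then show ?thesis
    unfolding D_def[symmetric]
    using selfadjoint_left_inverse_invertible[OF D Dst] comp_in_hom[OF comp_in_hom[OF b(2) mi(1)] b(4)]
    by blast
qed

lemma strictly_contractive_imp_herm_lt_block_matrix:
  assumes B: "is_biproduct C X Y P s1 (s1\<^sup>\<dagger>) s2 (s2\<^sup>\<dagger>)" and f: "f \<in> hom C X Y"
    and sc: "strictly_contractive C f" and m: "m \<in> hom C P P"
    and entries: "s1\<^sup>\<dagger> \<cdot> m \<cdot> s1 = idt C X" "s1\<^sup>\<dagger> \<cdot> m \<cdot> s2 = f\<^sup>\<dagger>"
      "s2\<^sup>\<dagger> \<cdot> m \<cdot> s1 = f" "s2\<^sup>\<dagger> \<cdot> m \<cdot> s2 = idt C Y"
  shows "herm_lt C (zero C P P) m"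
proof -
  obtain S u1 u2 where cd: "codilation C f S u1 u2" and cop: "is_coproduct C X Y S u1 u2"
    using strictly_contractive_imp_coproduct_codilation[OF f sc] .
  note u = codilationD[OF cd f]
  obtain z where z: "z \<in> hom C P S" "z \<cdot> s1 = u1" "z \<cdot> s2 = u2"
    using coproduct_copair[OF biproduct_is_coproduct[OF B] u(1,2)] .
  have "m = z\<^sup>\<dagger> \<cdot> z"
    using codilation_iff_gram[OF B f m entries z(1)] cd z(2,3) by simp
  moreover have "invertible C (z\<^sup>\<dagger> \<cdot> z)"
    using invertible_gram coproduct_comparison_invertible[OF biproduct_is_coproduct[OF B] cop z] z(1)
    by blast
  ultimately show ?thesis
    using herm_lt_zero_iff[OF m] z(1) by blast
qed

lemma herm_lt_block_matrix_imp_strictly_contractive: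
  assumes B: "is_biproduct C X Y P s1 (s1\<^sup>\<dagger>) s2 (s2\<^sup>\<dagger>)" and f: "f \<in> hom C X Y"
    and m: "m \<in> hom C P P" "herm_lt C (zero C P P) m"
    and entries: "s1\<^sup>\<dagger> \<cdot> m \<cdot> s1 = idt C X" "s1\<^sup>\<dagger> \<cdot> m \<cdot> s2 = f\<^sup>\<dagger>"
      "s2\<^sup>\<dagger> \<cdot> m \<cdot> s1 = f" "s2\<^sup>\<dagger> \<cdot> m \<cdot> s2 = idt C Y"
  shows "strictly_contractive C f"
proof -
  note X = in_hom_Ob(1)[OF f]
  obtain W z where z: "z \<in> hom C P W" "m = z\<^sup>\<dagger> \<cdot> z" "invertible C (z\<^sup>\<dagger> \<cdot> z)"
    using m herm_lt_zero_iff by blast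
  have cd: "codilation C f W (z \<cdot> s1) (z \<cdot> s2)"
    using codilation_iff_gram[OF B f m(1) entries z(1)] z(2) by simp
  note c = codilationD[OF cd f]
  obtain K k where k: "k \<in> hom C K W" "is_kernel C k ((z \<cdot> s2)\<^sup>\<dagger>)" "isometry C k"
    using ex_isometric_kernel[OF star_in_hom[OF c(2)]] .
  define y where "y = k\<^sup>\<dagger> \<cdot> z \<cdot> s1"
  have y: "y \<in> hom C X K"
    unfolding y_def using comp_in_hom[OF c(1) star_in_hom[OF k(1)]] .
  have ff: "f\<^sup>\<dagger> \<cdot> f \<in> hom C X X" and yy: "y\<^sup>\<dagger> \<cdot> y \<in> hom C X X"
    using comp_in_hom star_in_hom f y by blast+
  have "y\<^sup>\<dagger> \<cdot> y \<oplus> f\<^sup>\<dagger> \<cdot> f = idt C X"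
    using codilation_defect[OF f cd k] madd_commute unfolding y_def by metis
  then have "y\<^sup>\<dagger> \<cdot> y = idt C X \<oplus> mneg (f\<^sup>\<dagger> \<cdot> f)"
    using madd_eq_iff_eq_madd_mneg[OF yy ff id_in_hom[OF X]] by blast
  moreover have "invertible C (idt C X \<oplus> mneg (f\<^sup>\<dagger> \<cdot> f))"
    using schur_complement_invertible[OF B f m(1) _ entries] z(2,3) by blast
  ultimately show ?thesis
    using strictly_contractive_iff[OF f] codilation_defect[OF f cd k] y unfolding y_def by metis
qed

lemma codilation_comparison_isometry:
  assumes f: "f \<in> hom C X Y" and cop: "is_coproduct C X Y S s1 s2"
    and cs: "codilation C f S s1 s2" and ct: "codilation C f T t1 t2"
    and t: "t \<in> hom C S T" "t \<cdot> s1 = t1" "t \<cdot> s2 = t2"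
  shows "isometry C t"
proof -
  note s = codilationD[OF cs f] and u = codilationD[OF ct f]
  have tt: "t\<^sup>\<dagger> \<cdot> t \<in> hom C S S"
    using comp_in_hom star_in_hom t(1) by blast
  have gram: "sj\<^sup>\<dagger> \<cdot> (t\<^sup>\<dagger> \<cdot> t) \<cdot> si = (t \<cdot> sj)\<^sup>\<dagger> \<cdot> (t \<cdot> si)"
    if "si \<in> hom C A S" "sj \<in> hom C B S" for si sj A B
    using that t(1) by (simp add: in_hom_iff comp_assoc)
  have "(t\<^sup>\<dagger> \<cdot> t) \<cdot> s1 = s1"
    using coproduct_eqI_star[OF cop comp_in_hom[OF s(1) tt] s(1)] gram[OF s(1) s(1)]
      gram[OF s(1) s(2)] s u t(2,3) by simp
  moreover have "(t\<^sup>\<dagger> \<cdot> t) \<cdot> s2 = s2"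
    using coproduct_eqI_star[OF cop comp_in_hom[OF s(2) tt] s(2)] gram[OF s(2) s(1)]
      gram[OF s(2) s(2)] s u t(2,3) by simp
  ultimately have "t\<^sup>\<dagger> \<cdot> t = idt C S"
    using coproduct_eqI[OF cop tt id_in_hom[OF in_hom_Ob(1)[OF t(1)]]] s(1,2)
    by (simp add: in_hom_iff)
  then show ?thesis
    using t(1) unfolding isometry_def in_hom_iff by simp
qed

lemma coproduct_codilation_is_codilator:
  assumes f: "f \<in> hom C X Y" and cd: "codilation C f S s1 s2" and cop: "is_coproduct C X Y S s1 s2"
  shows "codilator C f S s1 s2"
proof -
  have "\<exists>!t. t \<in> hom C S T \<and> isometry C t \<and> t \<cdot> s1 = t1 \<and> t \<cdot> s2 = t2"
    if ct: "codilation C f T t1 t2" for T t1 t2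
  proof -
    note u = codilationD[OF ct f]
    obtain t where t: "t \<in> hom C S T" "t \<cdot> s1 = t1" "t \<cdot> s2 = t2"
      using coproduct_copair[OF cop u(1,2)] .
    moreover have "t' = t" if "t' \<in> hom C S T" "t' \<cdot> s1 = t1" "t' \<cdot> s2 = t2" for t'
      using coproduct_eqI[OF cop that(1) t(1)] that(2,3) t(2,3) by simp
    ultimately show ?thesis
      using codilation_comparison_isometry[OF f cop cd ct t] by blast
  qed
  then show ?thesis
    unfolding codilator_def using cd by blast
qed

lemma strictly_contractive_iff_coproduct_codilation:
  assumes f: "f \<in> hom C X Y"
  shows "strictly_contractive C f \<longleftrightarrow>
    (\<exists>S s1 s2. codilation C f S s1 s2 \<and> is_coproduct C X Y S s1 s2)"
  using strictly_contractive_imp_coproduct_codilation[OF f]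
    coproduct_codilation_imp_strictly_contractive[OF f] by metis

lemma strictly_contractive_iff_herm_lt_block_matrices:
  assumes f: "f \<in> hom C X Y"
  shows "strictly_contractive C f \<longleftrightarrow>
    (\<forall>P s1 r1 s2 r2 m. ortho_biproduct C X Y P s1 r1 s2 r2 \<and> m \<in> hom C P P \<and>
       r1 \<cdot> m \<cdot> s1 = idt C X \<and> r1 \<cdot> m \<cdot> s2 = f\<^sup>\<dagger> \<and> r2 \<cdot> m \<cdot> s1 = f \<and> r2 \<cdot> m \<cdot> s2 = idt C Y
       \<longrightarrow> herm_lt C (zero C P P) m)"
    (is "_ \<longleftrightarrow> ?positive")
proof
  assume "strictly_contractive C f"
  then show ?positive
    using strictly_contractive_imp_herm_lt_block_matrix[OF _ f] unfolding ortho_biproduct_def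
    by blast
next
  assume ?positive
  obtain P s1 s2 where OB: "ortho_biproduct C X Y P s1 (s1\<^sup>\<dagger>) s2 (s2\<^sup>\<dagger>)"
    using ex_ortho_biproduct[OF in_hom_Ob[OF f]] .
  then have B: "is_biproduct C X Y P s1 (s1\<^sup>\<dagger>) s2 (s2\<^sup>\<dagger>)"
    unfolding ortho_biproduct_def by blast
  obtain m where m: "m \<in> hom C P P" and entries: "s1\<^sup>\<dagger> \<cdot> m \<cdot> s1 = idt C X"
    "s1\<^sup>\<dagger> \<cdot> m \<cdot> s2 = f\<^sup>\<dagger>" "s2\<^sup>\<dagger> \<cdot> m \<cdot> s1 = f" "s2\<^sup>\<dagger> \<cdot> m \<cdot> s2 = idt C Y"
    using ex_block_matrix[OF B f] .
  have "herm_lt C (zero C P P) m"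
    using \<open>?positive\<close>[rule_format, of P s1 "s1\<^sup>\<dagger>" s2 "s2\<^sup>\<dagger>" m] OB m entries by blast
  then show "strictly_contractive C f"
    using herm_lt_block_matrix_imp_strictly_contractive[OF B f m _ entries] by blast
qed

end

theorem theorem7p19:
  fixes C :: "('o, 'm) scat" and f :: 'm and X Y :: 'o
  assumes "pre_hilbert C"
    and "f \<in> hom C X Y"
  shows "(strictly_contractive C f \<longleftrightarrow>
            (\<exists>S s1 s2. codilation C f S s1 s2 \<and> is_coproduct C X Y S s1 s2))
       \<and> (strictly_contractive C f \<longleftrightarrow>
            (\<forall>P s1 r1 s2 r2 m. ortho_biproduct C X Y P s1 r1 s2 r2 \<and> m \<in> hom C P P \<and>
               cp C r1 (cp C m s1) = idt C X \<and> cp C r1 (cp C m s2) = str C f \<and>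
               cp C r2 (cp C m s1) = f \<and> cp C r2 (cp C m s2) = idt C Y
               \<longrightarrow> herm_lt C (zero C P P) m))
       \<and> (strictly_contractive C f \<longrightarrow>
            (\<forall>S s1 s2. codilation C f S s1 s2 \<and> is_coproduct C X Y S s1 s2
               \<longrightarrow> codilator C f S s1 s2))"
proof -
  interpret pre_hilbert_category C
    using assms(1) by unfold_locales
  show ?thesis
    using strictly_contractive_iff_coproduct_codilation[OF assms(2)]
      strictly_contractive_iff_herm_lt_block_matrices[OF assms(2)]
      coproduct_codilation_is_codilator[OF assms(2)]
    by blast
qed

end
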